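(* Let $W\subset J^k(3,3)$ be a submanifold. Fix a smooth $\bm\xi:U\to\mathbb{R}^4\setminus\{\bm0\}$ and a point $(u_0,t_0)\in U\times I$ with $\xi_4(u_0)\ne0$. Then the set $$T^{\bm\xi}_{4,W,(u_0,t_0)}=\{\bm x\in C^\infty(U,\mathbb{R}^4):\ j^k_1(\tilde\pi_4\circ\widetilde F_{(\bm x,\bm\xi)})\ \text{is transverse to } W \text{ at the point corresponding to }(u_0,t_0)\}$$ is residual in $C^\infty(U,\mathbb{R}^4)$ with the Whitney $C^\infty$ topology. The same holds with the index $4$ replaced by $j\in\{1,2,3\}$ when $\xi_j(u_0)\neq0$ (using $c_j$ and the projection $\tilde\pi_j$ forgetting the $j$-th coordinate).
   Context: $U\subset\mathbb{R}^3$ open, $I\subset\mathbb{R}$ open interval. For $\bm x\in C^\infty(U,\mathbb{R}^4)$: $a_0=x_4(u_0)+t_0\xi_4(u_0)$, $c_4(u)=-(x_4(u)-a_0)/\xi_4(u)$, and $\widetilde F_{(\bm x,\bm\xi)}(u,\tilde t)=\bm x(u)+c_4(u)\bm\xi(u)+\tilde t\bm\xi(u)$ (so $\tilde t=t-c_4(u)$ and $(u_0,t_0)$ corresponds to $(u_0,0)$). $\tilde\pi_4(y_1,y_2,y_3,y_4)=(y_1,y_2,y_3)$. For $G:U\times I\to\mathbb{R}^3$, $j^k_1G(u,s)=j^k G_s(u)\in J^k(3,3)$ where $G_s=G(\cdot,s)$, $J^k(3,3)$ the space of $k$-jets of map germs $(\mathbb{R}^3,0)\to(\mathbb{R}^3,0)$.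 *)

theory Defs
  imports "HOL-Analysis.Analysis"
begin

definition pdiff :: "'a::euclidean_space \<Rightarrow> ('a \<Rightarrow> 'b::real_normed_vector) \<Rightarrow> 'a \<Rightarrow> 'b" where
  "pdiff b f = (\<lambda>u. frechet_derivative f (at u) b)"

fun Ck_on :: "nat \<Rightarrow> 'a::euclidean_space set \<Rightarrow> ('a \<Rightarrow> 'b::real_normed_vector) \<Rightarrow> bool" where
  "Ck_on 0 U f = continuous_on U f"
| "Ck_on (Suc k) U f = ((\<forall>u\<in>U. f differentiable (at u)) \<and> (\<forall>b\<in>Basis. Ck_on k U (pdiff b f)))"

definition smooth_on :: "'a::euclidean_space set \<Rightarrow> ('a \<Rightarrow> 'b::real_normed_vector) \<Rightarrow> bool" where
  "smooth_on U f \<longleftrightarrow> (\<forall>k. Ck_on k U f)"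

definition Dmulti :: "nat \<times> nat \<times> nat \<Rightarrow> (real^3 \<Rightarrow> 'b::real_normed_vector) \<Rightarrow> real^3 \<Rightarrow> 'b" where
  "Dmulti \<alpha> f = (case \<alpha> of (a, b, c) \<Rightarrow>
     (pdiff (axis 1 1) ^^ a) ((pdiff (axis 2 1) ^^ b) ((pdiff (axis 3 1) ^^ c) f)))"

text \<open>Elements of C^\<infinity>(U,R^4) are represented by smooth maps on U that vanish outside U.\<close>
definition Cinf :: "(real^3) set \<Rightarrow> (real^3 \<Rightarrow> real^4) set" where
  "Cinf U = {f. smooth_on U f \<and> (\<forall>u. u \<notin> U \<longrightarrow> f u = 0)}"

definition whitney_nbhd :: "(real^3) set \<Rightarrow> (real^3 \<Rightarrow> real^4) \<Rightarrow> nat \<Rightarrow> (real^3 \<Rightarrow> real) \<Rightarrow> (real^3 \<Rightarrow> real^4) set" where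
  "whitney_nbhd U f k \<delta> = {g. \<forall>u\<in>U. \<forall>a b c. a + b + c \<le> k \<longrightarrow>
       norm (Dmulti (a,b,c) g u - Dmulti (a,b,c) f u) < \<delta> u}"

definition whitney_Cinf :: "(real^3) set \<Rightarrow> (real^3 \<Rightarrow> real^4) topology" where
  "whitney_Cinf U = topology (\<lambda>S. S \<subseteq> Cinf U \<and>
     (\<forall>f\<in>S. \<exists>k \<delta>. continuous_on U \<delta> \<and> (\<forall>u\<in>U. 0 < \<delta> u) \<and> Cinf U \<inter> whitney_nbhd U f k \<delta> \<subseteq> S))"

definition residual_in :: "'a topology \<Rightarrow> 'a set \<Rightarrow> bool" where
  "residual_in X S \<longleftrightarrow> S \<subseteq> topspace X \<and>
     (\<exists>\<F>. countable \<F> \<and> (\<forall>T\<in>\<F>. openin X T \<and> X closure_of T = topspace X) \<and>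
           topspace X \<inter> \<Inter>\<F> \<subseteq> S)"

text \<open>Coordinates of J^k(3,3): Taylor coefficients indexed by multi-index alpha with
  1 <= |alpha| <= k and output component i.\<close>
definition jet_index :: "nat \<Rightarrow> ((nat \<times> nat \<times> nat) \<times> 3) set" where
  "jet_index k = {((a,b,c),i). 1 \<le> a + b + c \<and> a + b + c \<le> k}"

text \<open>k-jet at u of the germ v |-> g(u+v) - g(u), read in the coordinates given by idx.\<close>
definition jet :: "('j \<Rightarrow> (nat \<times> nat \<times> nat) \<times> 3) \<Rightarrow> (real^3 \<Rightarrow> real^3) \<Rightarrow> real^3 \<Rightarrow> real^'j" where
  "jet idx g u = (\<chi> j. case idx j of ((a,b,c),i) \<Rightarrow>
      (Dmulti (a,b,c) g u $ i) / (fact a * fact b * fact c))"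

definition submanifold :: "('a::euclidean_space) set \<Rightarrow> bool" where
  "submanifold W \<longleftrightarrow> (\<forall>w\<in>W. \<exists>V (\<psi>::'a \<Rightarrow> 'a) L. open V \<and> w \<in> V \<and> subspace L \<and>
      smooth_on V \<psi> \<and> inj_on \<psi> V \<and> open (\<psi> ` V) \<and> smooth_on (\<psi> ` V) (inv_into V \<psi>) \<and>
      \<psi> ` (W \<inter> V) = L \<inter> \<psi> ` V)"

definition tangent_space :: "('a::euclidean_space) set \<Rightarrow> 'a \<Rightarrow> 'a set" where
  "tangent_space W w = {v. \<exists>\<gamma> e. 0 < e \<and> \<gamma> 0 = w \<and> (\<forall>t. \<bar>t\<bar> < e \<longrightarrow> \<gamma> t \<in> W) \<and>
      (\<gamma> has_vector_derivative v) (at 0)}"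

definition transversal_at :: "('c::real_normed_vector \<Rightarrow> 'a::euclidean_space) \<Rightarrow> 'a set \<Rightarrow> 'c \<Rightarrow> bool" where
  "transversal_at J W p \<longleftrightarrow> (J p \<in> W \<longrightarrow>
      (\<exists>J'. (J has_derivative J') (at p) \<and>
            {y + z | y z. y \<in> range J' \<and> z \<in> tangent_space W (J p)} = UNIV))"

definition forget_coord :: "4 \<Rightarrow> real^4 \<Rightarrow> real^3" where
  "forget_coord j y =
     (if j = 1 then vector [y$2, y$3, y$4]
      else if j = 2 then vector [y$1, y$3, y$4]
      else if j = 3 then vector [y$1, y$2, y$4]
      else vector [y$1, y$2, y$3])"

definition a_const :: "4 \<Rightarrow> (real^3 \<Rightarrow> real^4) \<Rightarrow> (real^3 \<Rightarrow> real^4) \<Rightarrow> real^3 \<Rightarrow> real \<Rightarrow> real" where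
  "a_const j x \<xi> u0 t0 = x u0 $ j + t0 * \<xi> u0 $ j"

definition c_fun :: "4 \<Rightarrow> (real^3 \<Rightarrow> real^4) \<Rightarrow> (real^3 \<Rightarrow> real^4) \<Rightarrow> real^3 \<Rightarrow> real \<Rightarrow> real^3 \<Rightarrow> real" where
  "c_fun j x \<xi> u0 t0 u = - (x u $ j - a_const j x \<xi> u0 t0) / (\<xi> u $ j)"

definition Ftilde :: "4 \<Rightarrow> (real^3 \<Rightarrow> real^4) \<Rightarrow> (real^3 \<Rightarrow> real^4) \<Rightarrow> real^3 \<Rightarrow> real \<Rightarrow> (real^3) \<times> real \<Rightarrow> real^4" where
  "Ftilde j x \<xi> u0 t0 = (\<lambda>(u, s). x u + c_fun j x \<xi> u0 t0 u *\<^sub>R \<xi> u + s *\<^sub>R \<xi> u)"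

definition jet1 :: "('j \<Rightarrow> (nat \<times> nat \<times> nat) \<times> 3) \<Rightarrow> ((real^3) \<times> real \<Rightarrow> real^3) \<Rightarrow> (real^3) \<times> real \<Rightarrow> real^'j" where
  "jet1 idx G = (\<lambda>(u, s). jet idx (\<lambda>v. G (v, s)) u)"

end

theory Submission
  imports Defs "HOL-Computational_Algebra.Polynomial"
begin

text \<open>Let \<open>K\<close> be the closure of \<open>W\<close> minus its interior. As \<open>W\<close> is locally closed, \<open>K\<close> is
  closed and nowhere dense, and a map whose value at a point lies outside \<open>K\<close> is transversal to
  \<open>W\<close> there: either the value is not in \<open>W\<close>, or it is an interior point, where the tangent
  space is everything. So it suffices that the \<open>k\<close>-jet at \<open>u0\<close> of the slice
  \<open>G\<^sub>0 = \<pi>\<^sub>j \<circ> F(\<cdot>, 0)\<close> avoids \<open>K\<close> for an open dense set of \<open>x\<close>. This jet depends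
  continuously on \<open>x\<close> in the Whitney topology: \<open>G\<^sub>0\<close> is affine in \<open>x\<close>, and the Leibniz rule
  bounds the derivatives of the term through \<open>c\<^sub>j\<close>. It is also locally onto: adding to \<open>x\<close>
  a small combination of monomials cut off by a bump function, with vanishing \<open>j\<close>-th
  coordinate so that \<open>c\<^sub>j\<close> is unchanged, moves the jet by any small prescribed vector.\<close>

section \<open>Smooth maps\<close>

lemma frechet_cong_open:
  assumes "open V" "u \<in> V" "\<And>v. v \<in> V \<Longrightarrow> f v = g v"
  shows "frechet_derivative f (at u) = frechet_derivative g (at u)"
proof -
  have "\<And>D. (f has_derivative D) (at u) \<longleftrightarrow> (g has_derivative D) (at u)"
    using has_derivative_transform_within_open[OF _ assms(1,2)] assms(3) by metis
  then show ?thesis unfolding frechet_derivative_def by simp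
qed

lemma pdiff_cong_open:
  assumes "open V" "u \<in> V" "\<And>v. v \<in> V \<Longrightarrow> f v = g v"
  shows "pdiff b f u = pdiff b g u"
  using frechet_cong_open[OF assms] unfolding pdiff_def by simp

lemma differentiable_cong_open:
  assumes "open V" "u \<in> V" "\<And>v. v \<in> V \<Longrightarrow> f v = g v" "f differentiable (at u)"
  shows "g differentiable (at u)"
  using assms has_derivative_transform_within_open unfolding differentiable_def by metis

lemma pdiff_at:
  assumes "(f has_derivative D) (at u)"
  shows "pdiff b f u = D b"
  using frechet_derivative_at[OF assms] unfolding pdiff_def by simp

lemma Ck_on_cong:
  assumes "Ck_on k V f" "open V" "\<And>v. v \<in> V \<Longrightarrow> f v = g v"
  shows "Ck_on k V g"
  using assms
proof (induction k arbitrary: f g)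
  case 0
  then show ?case using continuous_on_cong by (metis Ck_on.simps(1))
next
  case (Suc k)
  show ?case unfolding Ck_on.simps
  proof safe
    fix u assume "u \<in> V"
    then show "g differentiable at u"
      using Suc.prems differentiable_cong_open[OF \<open>open V\<close> \<open>u \<in> V\<close>] by auto
  next
    fix b :: 'a assume b: "b \<in> Basis"
    have "Ck_on k V (pdiff b f)" using Suc.prems b by simp
    moreover have "\<And>v. v \<in> V \<Longrightarrow> pdiff b f v = pdiff b g v"
      using pdiff_cong_open[OF \<open>open V\<close>] Suc.prems by blast
    ultimately show "Ck_on k V (pdiff b g)" using Suc.IH \<open>open V\<close> by blast
  qed
qed

lemma Ck_on_Suc_mono: "Ck_on (Suc k) V f \<Longrightarrow> Ck_on k V f"
proof (induction k arbitrary: f)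
  case 0
  then show ?case
    by (auto intro!: continuous_at_imp_continuous_on differentiable_imp_continuous_within)
next
  case (Suc k)
  then show ?case by (simp del: Ck_on.simps(2) add: Ck_on.simps(2)[of "Suc k"]) (simp)
qed

lemma Ck_on_const: "Ck_on k V (\<lambda>_. c)"
proof (induction k arbitrary: c)
  case 0 then show ?case by simp
next
  case (Suc k)
  have "pdiff b (\<lambda>_. c) = (\<lambda>_. 0)" for b :: 'a
    using pdiff_at[OF has_derivative_const] by fastforce
  then show ?case using Suc by simp
qed

lemma Ck_on_add:
  assumes "open V" "Ck_on k V f" "Ck_on k V g"
  shows "Ck_on k V (\<lambda>v. f v + g v)"
  using assms(2,3)
proof (induction k arbitrary: f g)
  case 0 then show ?case by (simp add: continuous_on_add)
next
  case (Suc k)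
  show ?case unfolding Ck_on.simps
  proof safe
    fix u assume "u \<in> V" then show "(\<lambda>v. f v + g v) differentiable at u"
      using Suc.prems by auto
  next
    fix b :: 'a assume b: "b \<in> Basis"
    have "Ck_on k V (\<lambda>v. pdiff b f v + pdiff b g v)" using Suc b by simp
    moreover have "pdiff b f v + pdiff b g v = pdiff b (\<lambda>v. f v + g v) v" if v: "v \<in> V" for v
    proof -
      have "f differentiable at v" "g differentiable at v" using Suc.prems v by simp_all
      then obtain F G where "(f has_derivative F) (at v)" "(g has_derivative G) (at v)"
        unfolding differentiable_def by auto
      then show ?thesis using pdiff_at has_derivative_add by metis
    qed
    ultimately show "Ck_on k V (pdiff b (\<lambda>v. f v + g v))"
      using Ck_on_cong[OF _ \<open>open V\<close>] by blast
  qed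
qed

lemma Ck_on_linear:
  assumes "open V" "bounded_linear L" "Ck_on k V f"
  shows "Ck_on k V (\<lambda>v. L (f v))"
  using assms(3)
proof (induction k arbitrary: f)
  case 0 then show ?case
    using bounded_linear.continuous_on[OF assms(2)] by simp
next
  case (Suc k)
  show ?case unfolding Ck_on.simps
  proof safe
    fix u assume "u \<in> V" then show "(\<lambda>v. L (f v)) differentiable at u"
      using Suc.prems assms(2) by (auto intro: bounded_linear_imp_differentiable differentiable_chain_at[unfolded o_def])
  next
    fix b :: 'a assume b: "b \<in> Basis"
    have "Ck_on k V (\<lambda>v. L (pdiff b f v))" using Suc b by simp
    moreover have "L (pdiff b f v) = pdiff b (\<lambda>v. L (f v)) v" if v: "v \<in> V" for v
    proof -
      have "f differentiable at v" using Suc.prems v by simp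
      then obtain F where "(f has_derivative F) (at v)"
        unfolding differentiable_def by auto
      then show ?thesis using pdiff_at bounded_linear.has_derivative[OF assms(2)] by metis
    qed
    ultimately show "Ck_on k V (pdiff b (\<lambda>v. L (f v)))"
      using Ck_on_cong[OF _ \<open>open V\<close>] by blast
  qed
qed

lemma Ck_on_scaleR:
  fixes f :: "'a::euclidean_space \<Rightarrow> real" and g :: "'a \<Rightarrow> 'b::real_normed_vector"
  assumes "open V" "Ck_on k V f" "Ck_on k V g"
  shows "Ck_on k V (\<lambda>v. f v *\<^sub>R g v)"
  using assms(2,3)
proof (induction k arbitrary: f g)
  case 0 then show ?case by (simp add: continuous_on_scaleR)
next
  case (Suc k)
  show ?case unfolding Ck_on.simps
  proof safe
    fix u assume "u \<in> V" then show "(\<lambda>v. f v *\<^sub>R g v) differentiable at u"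
      using Suc.prems differentiable_scaleR[of f u UNIV g] by simp
  next
    fix b :: 'a assume b: "b \<in> Basis"
    have f1: "Ck_on k V f" "Ck_on k V g" using Suc.prems Ck_on_Suc_mono by blast+
    have p: "Ck_on k V (pdiff b f)" "Ck_on k V (pdiff b g)" using Suc.prems b by simp_all
    have "Ck_on k V (\<lambda>v. f v *\<^sub>R pdiff b g v + pdiff b f v *\<^sub>R g v)"
      by (rule Ck_on_add[OF \<open>open V\<close> Suc.IH[OF f1(1) p(2)] Suc.IH[OF p(1) f1(2)]])
    moreover have "f v *\<^sub>R pdiff b g v + pdiff b f v *\<^sub>R g v = pdiff b (\<lambda>v. f v *\<^sub>R g v) v" if v: "v \<in> V" for v
    proof -
      have "f differentiable at v" "g differentiable at v" using Suc.prems v by simp_all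
      then obtain F G where "(f has_derivative F) (at v)" "(g has_derivative G) (at v)"
        unfolding differentiable_def by auto
      then have "((\<lambda>v. f v *\<^sub>R g v) has_derivative (\<lambda>h. f v *\<^sub>R G h + F h *\<^sub>R g v)) (at v)"
        by (rule has_derivative_scaleR)
      from pdiff_at[OF this, of b] pdiff_at[OF \<open>(f has_derivative F) (at v)\<close>, of b]
        pdiff_at[OF \<open>(g has_derivative G) (at v)\<close>, of b]
      show ?thesis by simp
    qed
    ultimately show "Ck_on k V (pdiff b (\<lambda>v. f v *\<^sub>R g v))"
      using Ck_on_cong[OF _ \<open>open V\<close>] by blast
  qed
qed

lemma Ck_on_mult:
  fixes f g :: "'a::euclidean_space \<Rightarrow> real"
  assumes "open V" "Ck_on k V f" "Ck_on k V g"
  shows "Ck_on k V (\<lambda>v. f v * g v)"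
  using Ck_on_scaleR[OF assms] by (simp only: real_scaleR_def)

lemma Ck_on_inverse:
  fixes g :: "'a::euclidean_space \<Rightarrow> real"
  assumes "open V" "Ck_on k V g" "\<And>v. v \<in> V \<Longrightarrow> g v \<noteq> 0"
  shows "Ck_on k V (\<lambda>v. inverse (g v))"
  using assms(2)
proof (induction k)
  case 0
  have "\<forall>x\<in>V. g x \<noteq> 0" using assms(3) by blast
  then show ?case using 0 by (simp add: continuous_on_inverse)
next
  case (Suc k)
  show ?case unfolding Ck_on.simps
  proof safe
    fix u assume "u \<in> V" then show "(\<lambda>v. inverse (g v)) differentiable at u"
    proof -
      have "g differentiable at u" using Suc.prems \<open>u \<in> V\<close> by simp
      then obtain G where G: "(g has_derivative G) (at u)" unfolding differentiable_def by auto
      show ?thesis using Deriv.has_derivative_inverse[OF assms(3)[OF \<open>u \<in> V\<close>] G] unfolding differentiable_def by blast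
    qed
  next
    fix b :: 'a assume b: "b \<in> Basis"
    have g1: "Ck_on k V g" using Suc.prems Ck_on_Suc_mono by blast
    have i1: "Ck_on k V (\<lambda>v. inverse (g v))" using Suc.IH[OF g1] .
    have a: "Ck_on k V (pdiff b g)" using Suc.prems b by simp
    have m1: "Ck_on k V (\<lambda>v. inverse (g v) * inverse (g v))" using Ck_on_mult[OF \<open>open V\<close> i1 i1] .
    have m2: "Ck_on k V (\<lambda>v. pdiff b g v * (inverse (g v) * inverse (g v)))"
      using Ck_on_mult[OF \<open>open V\<close> a m1] by simp
    have "Ck_on k V (\<lambda>v. - (pdiff b g v * (inverse (g v) * inverse (g v))))"
      using Ck_on_linear[OF \<open>open V\<close> bounded_linear_minus[OF bounded_linear_ident] m2] by simp
    moreover have "- (pdiff b g v * (inverse (g v) * inverse (g v))) = pdiff b (\<lambda>v. inverse (g v)) v" if v: "v \<in> V" for v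
    proof -
      have "g differentiable at v" using Suc.prems v by simp_all
      then obtain G where G: "(g has_derivative G) (at v)"
        unfolding differentiable_def by auto
      have "pdiff b (\<lambda>v. inverse (g v)) v = - (inverse (g v) * G b * inverse (g v))"
        using pdiff_at[OF Deriv.has_derivative_inverse[OF assms(3)[OF v] G]] .
      moreover have "pdiff b g v = G b" using pdiff_at[OF G] .
      ultimately show ?thesis by (simp add: algebra_simps)
    qed
    ultimately show "Ck_on k V (pdiff b (\<lambda>v. inverse (g v)))"
      using Ck_on_cong[OF _ \<open>open V\<close>] by blast
  qed
qed

lemma Ck_on_subset:
  assumes "Ck_on k V f" "V' \<subseteq> V"
  shows "Ck_on k V' f"
  using assms
proof (induction k arbitrary: f)
  case 0 then show ?case using continuous_on_subset by auto
next
  case (Suc k) then show ?case by auto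
qed

lemma smooth_on_const: "smooth_on V (\<lambda>_. c)"
  unfolding smooth_on_def using Ck_on_const by blast

lemma smooth_on_add: "open V \<Longrightarrow> smooth_on V f \<Longrightarrow> smooth_on V g \<Longrightarrow> smooth_on V (\<lambda>v. f v + g v)"
  unfolding smooth_on_def using Ck_on_add by blast

lemma smooth_on_linear: "open V \<Longrightarrow> bounded_linear L \<Longrightarrow> smooth_on V f \<Longrightarrow> smooth_on V (\<lambda>v. L (f v))"
  unfolding smooth_on_def using Ck_on_linear by blast

lemma smooth_on_scaleR:
  fixes f :: "'a::euclidean_space \<Rightarrow> real" and g :: "'a \<Rightarrow> 'b::real_normed_vector"
  shows "open V \<Longrightarrow> smooth_on V f \<Longrightarrow> smooth_on V g \<Longrightarrow> smooth_on V (\<lambda>v. f v *\<^sub>R g v)"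
  unfolding smooth_on_def using Ck_on_scaleR by blast

lemma smooth_on_mult:
  fixes f g :: "'a::euclidean_space \<Rightarrow> real"
  shows "open V \<Longrightarrow> smooth_on V f \<Longrightarrow> smooth_on V g \<Longrightarrow> smooth_on V (\<lambda>v. f v * g v)"
  unfolding smooth_on_def using Ck_on_mult by blast

lemma smooth_on_inverse:
  fixes g :: "'a::euclidean_space \<Rightarrow> real"
  shows "open V \<Longrightarrow> smooth_on V g \<Longrightarrow> (\<And>v. v \<in> V \<Longrightarrow> g v \<noteq> 0) \<Longrightarrow> smooth_on V (\<lambda>v. inverse (g v))"
  unfolding smooth_on_def using Ck_on_inverse by blast

lemma smooth_on_subset: "smooth_on V f \<Longrightarrow> V' \<subseteq> V \<Longrightarrow> smooth_on V' f"
  unfolding smooth_on_def using Ck_on_subset by blast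

lemma smooth_on_pdiff: "smooth_on V f \<Longrightarrow> b \<in> Basis \<Longrightarrow> smooth_on V (pdiff b f)"
  unfolding smooth_on_def by (metis Ck_on.simps(2))

lemma smooth_on_differentiable: "smooth_on V f \<Longrightarrow> u \<in> V \<Longrightarrow> f differentiable (at u)"
  unfolding smooth_on_def by (metis Ck_on.simps(2))

lemma smooth_on_continuous: "smooth_on V f \<Longrightarrow> continuous_on V f"
  unfolding smooth_on_def by (metis Ck_on.simps(1))

lemma smooth_on_diff: "open V \<Longrightarrow> smooth_on V f \<Longrightarrow> smooth_on V g \<Longrightarrow> smooth_on V (\<lambda>v. f v - g v)"
proof -
  assume a: "open V" "smooth_on V f" "smooth_on V g"
  have "smooth_on V (\<lambda>v. - g v)" using smooth_on_linear[OF a(1) bounded_linear_minus[OF bounded_linear_ident] a(3)] .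
  from smooth_on_add[OF a(1,2) this] show ?thesis by simp
qed

fun Ck_real :: "nat \<Rightarrow> (real \<Rightarrow> real) \<Rightarrow> bool" where
  "Ck_real 0 f = continuous_on UNIV f"
| "Ck_real (Suc k) f = ((\<forall>t. f differentiable (at t)) \<and> Ck_real k (deriv f))"

definition smooth_real :: "(real \<Rightarrow> real) \<Rightarrow> bool" where
  "smooth_real f \<longleftrightarrow> (\<forall>k. Ck_real k f)"

lemma smooth_real_deriv_chain:
  assumes "\<And>n t. (F n has_real_derivative F (Suc n) t) (at t)"
  shows "smooth_real (F n)"
proof -
  have "Ck_real k (F n)" for k
  proof (induction k arbitrary: n)
    case 0
    have "isCont (F n) t" for t using DERIV_isCont[OF assms] .
    then show ?case by (simp add: continuous_at_imp_continuous_on)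
  next
    case (Suc k)
    have d: "deriv (F n) = F (Suc n)" using DERIV_imp_deriv[OF assms] by blast
    have "F n differentiable (at t)" for t using assms real_differentiable_def by blast
    then show ?case using Suc d by simp
  qed
  then show ?thesis by (simp add: smooth_real_def)
qed

lemma smooth_real_deriv: "smooth_real f \<Longrightarrow> smooth_real (deriv f)"
  unfolding smooth_real_def by (metis Ck_real.simps(2))

lemma smooth_real_differentiable: "smooth_real f \<Longrightarrow> f differentiable (at t)"
  unfolding smooth_real_def by (metis Ck_real.simps(2))

lemma smooth_real_continuous: "smooth_real f \<Longrightarrow> continuous_on UNIV f"
  unfolding smooth_real_def by (metis Ck_real.simps(1))

lemma smooth_real_has_deriv: "smooth_real f \<Longrightarrow> (f has_real_derivative deriv f t) (at t)"
  using smooth_real_differentiable DERIV_deriv_iff_real_differentiable by blast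

lemma Ck_on_compose_real:
  fixes g :: "'a::euclidean_space \<Rightarrow> real"
  assumes "open V" "Ck_on k V g" "smooth_real \<Phi>"
  shows "Ck_on k V (\<lambda>v. \<Phi> (g v))"
  using assms(2,3)
proof (induction k arbitrary: \<Phi>)
  case 0
  have "continuous_on (g ` V) \<Phi>" using smooth_real_continuous[OF 0(2)] continuous_on_subset by blast
  then show ?case using 0(1) continuous_on_compose2 by fastforce
next
  case (Suc k)
  show ?case unfolding Ck_on.simps
  proof safe
    fix u assume "u \<in> V"
    then have "g differentiable at u" using Suc.prems by simp
    moreover have "\<Phi> differentiable at (g u)" using smooth_real_differentiable[OF Suc.prems(2)] .
    ultimately show "(\<lambda>v. \<Phi> (g v)) differentiable at u"
      using differentiable_chain_at[of g u \<Phi>] by (simp add: o_def)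
  next
    fix b :: 'a assume b: "b \<in> Basis"
    have g1: "Ck_on k V g" using Suc.prems(1) Ck_on_Suc_mono by blast
    have a: "Ck_on k V (pdiff b g)" using Suc.prems b by simp
    have "Ck_on k V (\<lambda>v. deriv \<Phi> (g v))" using Suc.IH[OF g1 smooth_real_deriv[OF Suc.prems(2)]] .
    then have "Ck_on k V (\<lambda>v. pdiff b g v * deriv \<Phi> (g v))" using Ck_on_mult[OF assms(1) a] by blast
    moreover have "pdiff b g v * deriv \<Phi> (g v) = pdiff b (\<lambda>v. \<Phi> (g v)) v" if v: "v \<in> V" for v
    proof -
      have "g differentiable at v" using Suc.prems v by simp
      then obtain G where G: "(g has_derivative G) (at v)" unfolding differentiable_def by auto
      have P0: "(\<Phi> has_derivative (*) (deriv \<Phi> (g v))) (at (g v))"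
        using smooth_real_has_deriv[OF Suc.prems(2)] unfolding has_field_derivative_def .
      have eqf: "(*) (deriv \<Phi> (g v)) = (\<lambda>x. x * deriv \<Phi> (g v))" by (auto simp: fun_eq_iff)
      have P: "(\<Phi> has_derivative (\<lambda>x. x * deriv \<Phi> (g v))) (at (g v))"
        using P0 unfolding eqf .
      have "((\<lambda>v. \<Phi> (g v)) has_derivative (\<lambda>h. G h * deriv \<Phi> (g v))) (at v)"
        using has_derivative_compose[OF G P] .
      from pdiff_at[OF this, of b] pdiff_at[OF G, of b] show ?thesis by simp
    qed
    ultimately show "Ck_on k V (pdiff b (\<lambda>v. \<Phi> (g v)))" using Ck_on_cong[OF _ assms(1)] by blast
  qed
qed

lemma smooth_on_compose_real:
  fixes g :: "'a::euclidean_space \<Rightarrow> real"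
  shows "open V \<Longrightarrow> smooth_on V g \<Longrightarrow> smooth_real \<Phi> \<Longrightarrow> smooth_on V (\<lambda>v. \<Phi> (g v))"
  unfolding smooth_on_def using Ck_on_compose_real by blast

section \<open>Iterated partial derivatives and the Leibniz rule\<close>

definition pdiffs :: "'a::euclidean_space list \<Rightarrow> ('a \<Rightarrow> 'b::real_normed_vector) \<Rightarrow> 'a \<Rightarrow> 'b" where
  "pdiffs bs f = foldr pdiff bs f"

lemma pdiffs_Nil[simp]: "pdiffs [] f = f" by (simp add: pdiffs_def)
lemma pdiffs_Cons[simp]: "pdiffs (b # bs) f = pdiff b (pdiffs bs f)" by (simp add: pdiffs_def)
lemma pdiffs_append: "pdiffs (xs @ ys) f = pdiffs xs (pdiffs ys f)" by (simp add: pdiffs_def)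

lemma smooth_on_pdiffs: "smooth_on V f \<Longrightarrow> set bs \<subseteq> Basis \<Longrightarrow> smooth_on V (pdiffs bs f)"
  by (induction bs) (auto intro: smooth_on_pdiff)

lemma pdiffs_cong:
  assumes "open V" "\<And>v. v \<in> V \<Longrightarrow> f v = g v" "u \<in> V"
  shows "pdiffs bs f u = pdiffs bs g u"
  using assms(3)
proof (induction bs arbitrary: u)
  case Nil then show ?case using assms(2) by simp
next
  case (Cons b bs)
  then show ?case using pdiff_cong_open[OF assms(1) Cons.prems, of "pdiffs bs f" "pdiffs bs g"] by simp
qed

lemma pdiff_add:
  assumes "f differentiable (at u)" "g differentiable (at u)"
  shows "pdiff b (\<lambda>v. f v + g v) u = pdiff b f u + pdiff b g u"
proof -
  obtain F G where "(f has_derivative F) (at u)" "(g has_derivative G) (at u)"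
    using assms unfolding differentiable_def by auto
  then show ?thesis using pdiff_at has_derivative_add by metis
qed

lemma pdiff_linear:
  assumes "f differentiable (at u)" "bounded_linear L"
  shows "pdiff b (\<lambda>v. L (f v)) u = L (pdiff b f u)"
proof -
  obtain F where "(f has_derivative F) (at u)"
    using assms unfolding differentiable_def by auto
  then show ?thesis using pdiff_at bounded_linear.has_derivative[OF assms(2)] by metis
qed

lemma pdiffs_add:
  assumes "open V" "smooth_on V f" "smooth_on V g" "set bs \<subseteq> Basis" "u \<in> V"
  shows "pdiffs bs (\<lambda>v. f v + g v) u = pdiffs bs f u + pdiffs bs g u"
  using assms(4,5)
proof (induction bs arbitrary: u)
  case Nil then show ?case by simp
next
  case (Cons b bs)
  have "pdiffs (b # bs) (\<lambda>v. f v + g v) u = pdiff b (\<lambda>v. pdiffs bs f v + pdiffs bs g v) u"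
    using pdiff_cong_open[OF assms(1) Cons.prems(2), of "pdiffs bs (\<lambda>v. f v + g v)"] Cons by simp
  also have "\<dots> = pdiff b (pdiffs bs f) u + pdiff b (pdiffs bs g) u"
    using Cons.prems smooth_on_pdiffs[OF assms(2)] smooth_on_pdiffs[OF assms(3)]
    by (intro pdiff_add) (auto intro: smooth_on_differentiable)
  finally show ?case by simp
qed

lemma pdiffs_linear:
  assumes "open V" "smooth_on V f" "bounded_linear L" "set bs \<subseteq> Basis" "u \<in> V"
  shows "pdiffs bs (\<lambda>v. L (f v)) u = L (pdiffs bs f u)"
  using assms(4,5)
proof (induction bs arbitrary: u)
  case Nil then show ?case by simp
next
  case (Cons b bs)
  have "pdiffs (b # bs) (\<lambda>v. L (f v)) u = pdiff b (\<lambda>v. L (pdiffs bs f v)) u"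
    using pdiff_cong_open[OF assms(1) Cons.prems(2), of "pdiffs bs (\<lambda>v. L (f v))"] Cons by simp
  also have "\<dots> = L (pdiff b (pdiffs bs f) u)"
    using Cons.prems smooth_on_pdiffs[OF assms(2)]
    by (intro pdiff_linear assms(3)) (auto intro: smooth_on_differentiable)
  finally show ?case by simp
qed

lemma pdiffs_const:
  assumes "bs \<noteq> []"
  shows "pdiffs bs (\<lambda>_. c) u = 0"
  using assms
proof (induction bs arbitrary: u)
  case Nil then show ?case by simp
next
  case (Cons b bs)
  show ?case
  proof (cases "bs = []")
    case True then show ?thesis using pdiff_at[OF has_derivative_const] by simp
  next
    case False
    then have "pdiffs bs (\<lambda>_. c) = (\<lambda>_. 0)" using Cons by auto
    then show ?thesis using pdiff_at[OF has_derivative_const] by simp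
  qed
qed

lemma smooth_on_sum:
  assumes "open V" "finite I" "\<And>i. i \<in> I \<Longrightarrow> smooth_on V (f i)"
  shows "smooth_on V (\<lambda>v. \<Sum>i\<in>I. f i v)"
  using assms(2,3)
proof (induction I rule: finite_induct)
  case empty then show ?case by (simp add: smooth_on_const)
next
  case (insert x F) then show ?case by (simp add: smooth_on_add[OF assms(1)])
qed

lemma pdiffs_sum:
  assumes "open V" "finite I" "\<And>i. i \<in> I \<Longrightarrow> smooth_on V (f i)" "set bs \<subseteq> Basis" "u \<in> V"
  shows "pdiffs bs (\<lambda>v. \<Sum>i\<in>I. f i v) u = (\<Sum>i\<in>I. pdiffs bs (f i) u)"
  using assms(2,3)
proof (induction I rule: finite_induct)
  case empty then show ?case by (cases "bs = []") (simp_all add: pdiffs_const)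
next
  case (insert x F)
  then show ?case
    using pdiffs_add[OF assms(1) _ smooth_on_sum[OF assms(1) insert(1)] assms(4,5), of "f x" f]
    by simp
qed

lemma pdiffs_scaleR:
  assumes "open V" "smooth_on V f" "set bs \<subseteq> Basis" "u \<in> V"
  shows "pdiffs bs (\<lambda>v. c *\<^sub>R f v) u = c *\<^sub>R pdiffs bs f u"
  using pdiffs_linear[OF assms(1,2) bounded_linear_scaleR_right assms(3,4)] .

lemma pdiffs_diff:
  assumes "open V" "smooth_on V f" "smooth_on V g" "set bs \<subseteq> Basis" "u \<in> V"
  shows "pdiffs bs (\<lambda>v. f v - g v) u = pdiffs bs f u - pdiffs bs g u"
proof -
  have "smooth_on V (\<lambda>v. - g v)"
    using smooth_on_linear[OF assms(1) bounded_linear_minus[OF bounded_linear_ident] assms(3)] .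
  then show ?thesis
    using pdiffs_add[OF assms(1,2) _ assms(4,5), of "\<lambda>v. - g v"]
      pdiffs_linear[OF assms(1,3) bounded_linear_minus[OF bounded_linear_ident] assms(4,5)]
    by simp
qed

definition multi_dirs :: "nat \<times> nat \<times> nat \<Rightarrow> (real^3) list" where
  "multi_dirs \<alpha> = (case \<alpha> of (a,b,c) \<Rightarrow> replicate a (axis 1 1) @ replicate b (axis 2 1) @ replicate c (axis 3 1))"

lemma Dmulti_eq_pdiffs: "Dmulti \<alpha> f = pdiffs (multi_dirs \<alpha>) f"
  by (cases \<alpha>) (simp add: Dmulti_def multi_dirs_def pdiffs_append pdiffs_def)

lemma Dmulti_0[simp]: "Dmulti (0,0,0) f = f"
  by (simp add: Dmulti_def)

lemma multi_dirs_Basis: "set (multi_dirs \<alpha>) \<subseteq> Basis"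
  by (cases \<alpha>) (auto simp: multi_dirs_def)

lemma length_multi_dirs: "length (multi_dirs (a,b,c)) = a + b + c"
  by (simp add: multi_dirs_def)

fun sum_masks :: "nat \<Rightarrow> (bool list \<Rightarrow> 'a::comm_monoid_add) \<Rightarrow> 'a" where
  "sum_masks 0 F = F []"
| "sum_masks (Suc n) F = sum_masks n (\<lambda>ms. F (True # ms)) + sum_masks n (\<lambda>ms. F (False # ms))"

fun masked :: "bool list \<Rightarrow> 'a list \<Rightarrow> 'a list" where
  "masked [] bs = []"
| "masked (m # ms) [] = []"
| "masked (m # ms) (b # bs) = (if m then b # masked ms bs else masked ms bs)"

lemma sum_masks_add: "sum_masks n (\<lambda>ms. A ms + B ms) = sum_masks n A + sum_masks n B"
  by (induction n arbitrary: A B) (simp_all add: algebra_simps)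

lemma sum_masks_mono:
  fixes A B :: "bool list \<Rightarrow> real"
  shows "(\<And>ms. A ms \<le> B ms) \<Longrightarrow> sum_masks n A \<le> sum_masks n B"
  by (induction n arbitrary: A B) (simp_all add: add_mono)

lemma sum_masks_cmult:
  fixes A :: "bool list \<Rightarrow> real"
  shows "sum_masks n (\<lambda>ms. c * A ms) = c * sum_masks n A"
  by (induction n arbitrary: A) (simp_all add: algebra_simps)

lemma sum_masks_nonneg:
  fixes A :: "bool list \<Rightarrow> real"
  shows "(\<And>ms. 0 \<le> A ms) \<Longrightarrow> 0 \<le> sum_masks n A"
  by (induction n arbitrary: A) simp_all

lemma norm_sum_masks_le: "norm (sum_masks n A) \<le> sum_masks n (\<lambda>ms. norm (A ms))"
proof (induction n arbitrary: A)
  case 0 then show ?case by simp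
next
  case (Suc n)
  then show ?case by (simp add: norm_triangle_le add_mono)
qed

lemma has_derivative_sum_masks:
  assumes "\<And>ms. (T ms has_derivative D ms) (at u)"
  shows "((\<lambda>v. sum_masks n (\<lambda>ms. T ms v)) has_derivative (\<lambda>h. sum_masks n (\<lambda>ms. D ms h))) (at u)"
  using assms
proof (induction n arbitrary: T D)
  case 0 then show ?case by simp
next
  case (Suc n)
  have "((\<lambda>v. sum_masks n (\<lambda>ms. T (True # ms) v) + sum_masks n (\<lambda>ms. T (False # ms) v)) has_derivative
        (\<lambda>h. sum_masks n (\<lambda>ms. D (True # ms) h) + sum_masks n (\<lambda>ms. D (False # ms) h))) (at u)"
    by (intro has_derivative_add Suc.IH Suc.prems)
  then show ?case by simp
qed

lemma pdiff_sum_masks: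
  assumes "\<And>ms. T ms differentiable (at u)"
  shows "pdiff b (\<lambda>v. sum_masks n (\<lambda>ms. T ms v)) u = sum_masks n (\<lambda>ms. pdiff b (T ms) u)"
proof -
  obtain D where D: "\<And>ms. (T ms has_derivative D ms) (at u)"
    using assms unfolding differentiable_def by metis
  show ?thesis using pdiff_at[OF has_derivative_sum_masks[OF D]] pdiff_at[OF D] by simp
qed

lemma pdiff_scaleR:
  fixes f :: "'a::euclidean_space \<Rightarrow> real"
  assumes "f differentiable (at u)" "g differentiable (at u)"
  shows "pdiff b (\<lambda>v. f v *\<^sub>R g v) u = f u *\<^sub>R pdiff b g u + pdiff b f u *\<^sub>R g u"
proof -
  obtain F G where FG: "(f has_derivative F) (at u)" "(g has_derivative G) (at u)"
    using assms unfolding differentiable_def by auto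
  then have "((\<lambda>v. f v *\<^sub>R g v) has_derivative (\<lambda>h. f u *\<^sub>R G h + F h *\<^sub>R g u)) (at u)"
    by (rule has_derivative_scaleR)
  from pdiff_at[OF this, of b] pdiff_at[OF FG(1), of b] pdiff_at[OF FG(2), of b]
  show ?thesis by simp
qed

lemma set_masked: "set (masked ms bs) \<subseteq> set bs"
  by (induction ms bs rule: masked.induct) auto

lemma pdiffs_scaleR_leibniz:
  fixes f :: "'a::euclidean_space \<Rightarrow> real" and r :: "'a \<Rightarrow> 'b::real_normed_vector"
  assumes "open V" "smooth_on V f" "smooth_on V r" "set bs \<subseteq> Basis" "u \<in> V"
  shows "pdiffs bs (\<lambda>v. f v *\<^sub>R r v) u =
         sum_masks (length bs) (\<lambda>ms. pdiffs (masked ms bs) f u *\<^sub>R pdiffs (masked (map Not ms) bs) r u)"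
  using assms(4,5)
proof (induction bs arbitrary: u)
  case Nil then show ?case by simp
next
  case (Cons b bs)
  let ?T = "\<lambda>ms v. pdiffs (masked ms bs) f v *\<^sub>R pdiffs (masked (map Not ms) bs) r v"
  have sm: "smooth_on V (pdiffs (masked ms bs) f)" "smooth_on V (pdiffs (masked (map Not ms) bs) r)" for ms
    using Cons.prems set_masked[of ms bs] set_masked[of "map Not ms" bs] by (auto intro!: smooth_on_pdiffs assms)
  have "pdiffs (b # bs) (\<lambda>v. f v *\<^sub>R r v) u = pdiff b (\<lambda>v. sum_masks (length bs) (\<lambda>ms. ?T ms v)) u"
    using pdiff_cong_open[OF assms(1) Cons.prems(2), of "pdiffs bs (\<lambda>v. f v *\<^sub>R r v)"] Cons by simp
  also have "\<dots> = sum_masks (length bs) (\<lambda>ms. pdiff b (?T ms) u)"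
    using sm Cons.prems
    by (intro pdiff_sum_masks differentiable_scaleR) (auto intro: smooth_on_differentiable)
  also have "\<dots> = sum_masks (length bs) (\<lambda>ms. pdiffs (masked (True # ms) (b # bs)) f u *\<^sub>R pdiffs (masked (map Not (True # ms)) (b # bs)) r u
        + pdiffs (masked (False # ms) (b # bs)) f u *\<^sub>R pdiffs (masked (map Not (False # ms)) (b # bs)) r u)"
  proof -
    have pe: "pdiff b (?T ms) u = pdiffs (masked ms bs) f u *\<^sub>R pdiff b (pdiffs (masked (map Not ms) bs) r) u +
             pdiff b (pdiffs (masked ms bs) f) u *\<^sub>R pdiffs (masked (map Not ms) bs) r u" for ms
      using pdiff_scaleR[OF smooth_on_differentiable[OF sm(1) Cons.prems(2)] smooth_on_differentiable[OF sm(2) Cons.prems(2)]] .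
    show ?thesis by (simp add: pe add.commute)
  qed
  also have "\<dots> = sum_masks (length (b # bs)) (\<lambda>ms. pdiffs (masked ms (b # bs)) f u *\<^sub>R pdiffs (masked (map Not ms) (b # bs)) r u)"
    by (simp add: sum_masks_add)
  finally show ?case .
qed

lemma masked_Nil2[simp]: "masked ms [] = []" by (cases ms) auto

lemma masked_append: "masked ms (xs @ ys) = masked (take (length xs) ms) xs @ masked (drop (length xs) ms) ys"
proof (induction xs arbitrary: ms)
  case Nil then show ?case by simp
next
  case (Cons x xs) then show ?case by (cases ms) auto
qed

lemma masked_replicate: "\<exists>m\<le>n. masked ms (replicate n x) = replicate m x"
proof (induction n arbitrary: ms)
  case 0 then show ?case by simp
next
  case (Suc n)
  show ?case
  proof (cases ms)
    case Nil then show ?thesis by simp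
  next
    case (Cons m ms')
    obtain k where "k \<le> n" "masked ms' (replicate n x) = replicate k x" using Suc by blast
    then show ?thesis using Cons by (cases m) (auto intro: exI[of _ "Suc k"] exI[of _ k])
  qed
qed

lemma masked_multi_dirs: "\<exists>a' b' c'. a' \<le> a \<and> b' \<le> b \<and> c' \<le> c \<and> masked ms (multi_dirs (a,b,c)) = multi_dirs (a',b',c')"
proof -
  let ?ms1 = "drop a ms"
  obtain a' where a': "a' \<le> a" "masked (take a ms) (replicate a (axis 1 1 :: real^3)) = replicate a' (axis 1 1)"
    using masked_replicate[where n=a and ms="take a ms" and x="axis 1 1 :: real^3"] by blast
  obtain b' where b': "b' \<le> b" "masked (take b ?ms1) (replicate b (axis 2 1 :: real^3)) = replicate b' (axis 2 1)"
    using masked_replicate[where n=b and ms="take b ?ms1" and x="axis 2 1 :: real^3"] by blast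
  obtain c' where c': "c' \<le> c" "masked (drop b ?ms1) (replicate c (axis 3 1 :: real^3)) = replicate c' (axis 3 1)"
    using masked_replicate[where n=c and ms="drop b ?ms1" and x="axis 3 1 :: real^3"] by blast
  have "masked ms (multi_dirs (a,b,c)) = multi_dirs (a',b',c')"
    unfolding multi_dirs_def prod.case masked_append length_replicate a'(2) b'(2) c'(2) ..
  then show ?thesis using a'(1) b'(1) c'(1) by blast
qed

lemma norm_Dmulti_scaleR_le:
  fixes f :: "real^3 \<Rightarrow> real" and r :: "real^3 \<Rightarrow> 'b::real_normed_vector"
  assumes "open V" "smooth_on V f" "smooth_on V r" "u \<in> V"
    and "\<And>a' b' c'. a' \<le> a \<Longrightarrow> b' \<le> b \<Longrightarrow> c' \<le> c \<Longrightarrow> \<bar>Dmulti (a',b',c') f u\<bar> \<le> \<eta>"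
  shows "norm (Dmulti (a,b,c) (\<lambda>v. f v *\<^sub>R r v) u) \<le>
         \<eta> * sum_masks (a+b+c) (\<lambda>ms. norm (pdiffs (masked (map Not ms) (multi_dirs (a,b,c))) r u))"
proof -
  have "norm (Dmulti (a,b,c) (\<lambda>v. f v *\<^sub>R r v) u) =
     norm (sum_masks (a+b+c) (\<lambda>ms. pdiffs (masked ms (multi_dirs (a,b,c))) f u *\<^sub>R pdiffs (masked (map Not ms) (multi_dirs (a,b,c))) r u))"
    unfolding Dmulti_eq_pdiffs using pdiffs_scaleR_leibniz[OF assms(1-3) multi_dirs_Basis assms(4)] by (simp add: length_multi_dirs)
  also have "\<dots> \<le> sum_masks (a+b+c) (\<lambda>ms. norm (pdiffs (masked ms (multi_dirs (a,b,c))) f u *\<^sub>R pdiffs (masked (map Not ms) (multi_dirs (a,b,c))) r u))"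
    by (rule norm_sum_masks_le)
  also have "\<dots> \<le> sum_masks (a+b+c) (\<lambda>ms. \<eta> * norm (pdiffs (masked (map Not ms) (multi_dirs (a,b,c))) r u))"
  proof (rule sum_masks_mono)
    fix ms
    obtain a' b' c' where abc: "a' \<le> a" "b' \<le> b" "c' \<le> c" "masked ms (multi_dirs (a,b,c)) = multi_dirs (a',b',c')"
      using masked_multi_dirs by blast
    have "\<bar>pdiffs (masked ms (multi_dirs (a,b,c))) f u\<bar> \<le> \<eta>"
      using assms(5)[OF abc(1-3)] abc(4) by (simp add: Dmulti_eq_pdiffs)
    then show "norm (pdiffs (masked ms (multi_dirs (a,b,c))) f u *\<^sub>R pdiffs (masked (map Not ms) (multi_dirs (a,b,c))) r u)
       \<le> \<eta> * norm (pdiffs (masked (map Not ms) (multi_dirs (a,b,c))) r u)"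
      by (simp add: mult_right_mono)
  qed
  also have "\<dots> = \<eta> * sum_masks (a+b+c) (\<lambda>ms. norm (pdiffs (masked (map Not ms) (multi_dirs (a,b,c))) r u))"
    by (rule sum_masks_cmult)
  finally show ?thesis .
qed

lemma abs_Dmulti_centered_coord_le:
  assumes "open V" "smooth_on V d" "u0 \<in> V"
    and "norm (Dmulti (a,b,c) d u0) < \<eta>"
  shows "\<bar>Dmulti (a,b,c) (\<lambda>v. (d v - d u0) $ j) u0\<bar> \<le> \<eta>"
proof (cases "a + b + c = 0")
  case True
  have "0 \<le> \<eta>" using assms(4) norm_ge_zero[of "Dmulti (a,b,c) d u0"] by linarith
  then show ?thesis using True by simp
next
  case False
  then have ne: "multi_dirs (a,b,c) \<noteq> []" using length_multi_dirs[of a b c] by auto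
  have "Dmulti (a,b,c) (\<lambda>v. (d v - d u0) $ j) u0 = pdiffs (multi_dirs (a,b,c)) (\<lambda>v. d v - d u0) u0 $ j"
    unfolding Dmulti_eq_pdiffs
    using pdiffs_linear[OF assms(1) smooth_on_diff[OF assms(1,2) smooth_on_const] bounded_linear_vec_nth multi_dirs_Basis assms(3)]
    by simp
  also have "\<dots> = pdiffs (multi_dirs (a,b,c)) d u0 $ j"
    using pdiffs_diff[OF assms(1,2) smooth_on_const multi_dirs_Basis assms(3)] pdiffs_const[OF ne, of "d u0" u0] by simp
  finally have "\<bar>Dmulti (a,b,c) (\<lambda>v. (d v - d u0) $ j) u0\<bar> \<le> norm (Dmulti (a,b,c) d u0)"
    using component_le_norm_cart by (metis Dmulti_eq_pdiffs)
  then show ?thesis using assms(4) by simp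
qed

section \<open>Bump functions and localised monomials\<close>

lemma poly_times_exp_neg_tendsto_0: "((\<lambda>y. poly p y * exp (- y)) \<longlongrightarrow> (0::real)) at_top"
proof -
  have "((\<lambda>y. \<Sum>i\<le>degree p. coeff p i * (y ^ i / exp y)) \<longlongrightarrow> 0) at_top"
    by (intro tendsto_null_sum tendsto_mult_right_zero tendsto_power_div_exp_0)
  moreover have "poly p y * exp (- y) = (\<Sum>i\<le>degree p. coeff p i * (y ^ i / exp y))" for y
    by (simp add: poly_altdef sum_distrib_right exp_minus divide_inverse mult.assoc)
  ultimately show ?thesis by simp
qed

text \<open>For \<open>t > 0\<close>, \<open>flat n t = Q\<^sub>n (1/t) * exp (-1/t)\<close> is the \<open>n\<close>-th derivative of
  \<open>exp (-1/t)\<close>; the recursion for \<open>Q\<^sub>n\<close> is the chain rule in \<open>y = 1/t\<close>.\<close>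

fun flat_poly :: "nat \<Rightarrow> real poly" where
  "flat_poly 0 = 1"
| "flat_poly (Suc n) = [:0, 0, 1:] * (flat_poly n - pderiv (flat_poly n))"

definition flat :: "nat \<Rightarrow> real \<Rightarrow> real" where
  "flat n t = (if t > 0 then poly (flat_poly n) (inverse t) * exp (- inverse t) else 0)"

lemma flat_right_limit: "((\<lambda>t. poly p (inverse t) * exp (- inverse t)) \<longlongrightarrow> (0::real)) (at_right 0)"
  using filterlim_compose[OF poly_times_exp_neg_tendsto_0 filterlim_inverse_at_top_right] by (simp add: o_def)

lemma flat_deriv_pos:
  assumes "t > 0"
  shows "(flat n has_real_derivative flat (Suc n) t) (at t)"
proof -
  have "((\<lambda>t. poly (flat_poly n) (inverse t) * exp (- inverse t)) has_real_derivative
      (poly (pderiv (flat_poly n)) (inverse t) * (- inverse (t^2))) * exp (- inverse t) +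
       poly (flat_poly n) (inverse t) * (exp (- inverse t) * inverse (t^2))) (at t)"
    using assms
    by (auto intro!: derivative_eq_intros DERIV_chain2[OF poly_DERIV] simp: power2_eq_square field_simps)
  moreover have "(poly (pderiv (flat_poly n)) (inverse t) * (- inverse (t^2))) * exp (- inverse t) +
       poly (flat_poly n) (inverse t) * (exp (- inverse t) * inverse (t^2)) = flat (Suc n) t"
    using assms by (simp add: flat_def power2_eq_square field_simps)
  ultimately show ?thesis
    using has_field_derivative_transform_within_open[of _ _ t "{0<..}" "flat n"] assms
    by (simp add: flat_def)
qed

lemma flat_deriv_neg:
  assumes "t < 0"
  shows "(flat n has_real_derivative flat (Suc n) t) (at t)"
proof -
  have "(flat n has_real_derivative 0) (at t)"
    by (rule has_field_derivative_transform_within_open[where f="\<lambda>_. 0" and S="{..<0}"]) (auto simp: assms flat_def)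
  then show ?thesis using assms by (simp add: flat_def)
qed

lemma flat_deriv_0: "(flat n has_real_derivative flat (Suc n) 0) (at 0)"
proof -
  have "((\<lambda>h. (flat n (0 + h) - flat n 0) / h) \<longlongrightarrow> 0) (at 0)"
  proof (rule filterlim_split_at)
    show "((\<lambda>h. (flat n (0 + h) - flat n 0) / h) \<longlongrightarrow> 0) (at_left 0)"
    proof (rule Lim_transform_eventually[of "\<lambda>_. 0"])
      show "\<forall>\<^sub>F h in at_left 0. 0 = (flat n (0 + h) - flat n 0) / h"
        unfolding eventually_at_left_field by (auto simp: flat_def intro: exI[of _ "-1"])
    qed simp
    have "((\<lambda>t. poly (pCons 0 (flat_poly n)) (inverse t) * exp (- inverse t)) \<longlongrightarrow> (0::real)) (at_right 0)"
      by (rule flat_right_limit)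
    then show "((\<lambda>h. (flat n (0 + h) - flat n 0) / h) \<longlongrightarrow> 0) (at_right 0)"
    proof (rule Lim_transform_eventually)
      show "\<forall>\<^sub>F h in at_right 0. poly (pCons 0 (flat_poly n)) (inverse h) * exp (- inverse h) = (flat n (0 + h) - flat n 0) / h"
        unfolding eventually_at_right_field
        by (auto simp: flat_def divide_inverse intro!: exI[of _ 1])
    qed
  qed
  then show ?thesis unfolding DERIV_def by (simp add: flat_def)
qed

lemma flat_deriv: "(flat n has_real_derivative flat (Suc n) t) (at t)"
  using flat_deriv_pos flat_deriv_neg flat_deriv_0 by (metis linorder_neqE_linordered_idom)

lemma smooth_real_flat: "smooth_real (flat 0)"
  using smooth_real_deriv_chain[of flat, OF flat_deriv] .

lemma flat_0_eq: "flat 0 t = (if t > 0 then exp (- inverse t) else 0)"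
  by (simp add: flat_def)

definition tensor3 :: "(nat \<Rightarrow> real \<Rightarrow> real) \<Rightarrow> (nat \<Rightarrow> real \<Rightarrow> real) \<Rightarrow> (nat \<Rightarrow> real \<Rightarrow> real) \<Rightarrow> nat \<times> nat \<times> nat \<Rightarrow> real^3 \<Rightarrow> real" where
  "tensor3 F G H n u = (case n of (n1, n2, n3) \<Rightarrow> F n1 (u$1) * G n2 (u$2) * H n3 (u$3))"

definition deriv_chain :: "(nat \<Rightarrow> real \<Rightarrow> real) \<Rightarrow> bool" where
  "deriv_chain F \<longleftrightarrow> (\<forall>n t. (F n has_real_derivative F (Suc n) t) (at t))"

lemma has_derivative_deriv_chain_coord:
  assumes "deriv_chain F"
  shows "((\<lambda>u::real^3. F n (u$i)) has_derivative (\<lambda>h. h$i * F (Suc n) (u$i))) (at u)"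
proof -
  have P0: "(F n has_derivative (*) (F (Suc n) (u$i))) (at (u$i))"
    using assms unfolding deriv_chain_def has_field_derivative_def by blast
  have eqf: "(*) (F (Suc n) (u$i)) = (\<lambda>x. x * F (Suc n) (u$i))" by (auto simp: fun_eq_iff)
  have "(F n has_derivative (\<lambda>x. x * F (Suc n) (u$i))) (at (u$i))"
    using P0 unfolding eqf .
  from has_derivative_compose[OF bounded_linear.has_derivative[OF bounded_linear_vec_nth has_derivative_ident] this]
  show ?thesis by simp
qed

lemma has_derivative_tensor3:
  assumes "deriv_chain F" "deriv_chain G" "deriv_chain H"
  shows "(tensor3 F G H (n1,n2,n3) has_derivative
     (\<lambda>h. h$1 * F (Suc n1) (u$1) * G n2 (u$2) * H n3 (u$3) + F n1 (u$1) * (h$2 * G (Suc n2) (u$2)) * H n3 (u$3)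
        + F n1 (u$1) * G n2 (u$2) * (h$3 * H (Suc n3) (u$3)))) (at u)"
proof -
  have "((\<lambda>u. F n1 (u$1) * G n2 (u$2) * H n3 (u$3)) has_derivative
     (\<lambda>h. F n1 (u$1) * G n2 (u$2) * (h$3 * H (Suc n3) (u$3)) +
          (F n1 (u$1) * (h$2 * G (Suc n2) (u$2)) + h$1 * F (Suc n1) (u$1) * G n2 (u$2)) * H n3 (u$3))) (at u)"
    using has_derivative_mult[OF has_derivative_mult[OF has_derivative_deriv_chain_coord[OF assms(1), of n1 1 u]
          has_derivative_deriv_chain_coord[OF assms(2), of n2 2 u]] has_derivative_deriv_chain_coord[OF assms(3), of n3 3 u]]
    by simp
  then show ?thesis unfolding tensor3_def by (simp add: algebra_simps)
qed

lemma pdiff_tensor3: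
  assumes "deriv_chain F" "deriv_chain G" "deriv_chain H"
  shows "pdiff (axis 1 1) (tensor3 F G H (n1,n2,n3)) = tensor3 F G H (Suc n1,n2,n3)"
    "pdiff (axis 2 1) (tensor3 F G H (n1,n2,n3)) = tensor3 F G H (n1,Suc n2,n3)"
    "pdiff (axis 3 1) (tensor3 F G H (n1,n2,n3)) = tensor3 F G H (n1,n2,Suc n3)"
  using pdiff_at[OF has_derivative_tensor3[OF assms]]
  by (auto simp: fun_eq_iff tensor3_def axis_def)

lemma Dmulti_tensor3:
  assumes "deriv_chain F" "deriv_chain G" "deriv_chain H"
  shows "Dmulti (a,b,c) (tensor3 F G H (0,0,0)) = tensor3 F G H (a,b,c)"
proof -
  have 3: "(pdiff (axis 3 1) ^^ c) (tensor3 F G H (n1,n2,n3)) = tensor3 F G H (n1,n2,n3 + c)" for n1 n2 n3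
    by (induction c) (simp_all add: pdiff_tensor3[OF assms])
  have 2: "(pdiff (axis 2 1) ^^ b) (tensor3 F G H (n1,n2,n3)) = tensor3 F G H (n1,n2 + b,n3)" for n1 n2 n3
    by (induction b) (simp_all add: pdiff_tensor3[OF assms])
  have 1: "(pdiff (axis 1 1) ^^ a) (tensor3 F G H (n1,n2,n3)) = tensor3 F G H (n1 + a,n2,n3)" for n1 n2 n3
    by (induction a) (simp_all add: pdiff_tensor3[OF assms])
  show ?thesis unfolding Dmulti_def using 1 2 3 by simp
qed

lemma smooth_on_id: "smooth_on UNIV (\<lambda>u::'a::euclidean_space. u)"
proof -
  have "Ck_on k UNIV (\<lambda>u::'a. u)" for k
  proof (induction k)
    case 0 then show ?case by (simp add: continuous_on_id)
  next
    case (Suc k)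
    have "pdiff b (\<lambda>u::'a. u) = (\<lambda>_. b)" for b
      using pdiff_at[OF has_derivative_ident] by (auto simp: fun_eq_iff)
    then show ?case by (auto intro: Ck_on_const)
  qed
  then show ?thesis by (simp add: smooth_on_def)
qed

lemma smooth_on_coord: "smooth_on UNIV (\<lambda>u::real^3. u $ i)"
  using smooth_on_linear[OF open_UNIV bounded_linear_vec_nth smooth_on_id] .

lemma smooth_tensor3:
  assumes "deriv_chain F" "deriv_chain G" "deriv_chain H"
  shows "smooth_on UNIV (tensor3 F G H n)"
proof -
  obtain n1 n2 n3 where n: "n = (n1,n2,n3)" by (cases n) auto
  have s: "smooth_real (F n1)" "smooth_real (G n2)" "smooth_real (H n3)"
    using smooth_real_deriv_chain assms unfolding deriv_chain_def by blast+
  have "smooth_on UNIV (\<lambda>u::real^3. F n1 (u$1) * G n2 (u$2) * H n3 (u$3))"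
    by (intro smooth_on_mult[OF open_UNIV] smooth_on_compose_real[OF open_UNIV smooth_on_coord] s)
  then show ?thesis unfolding n tensor3_def by simp
qed

definition power_chain :: "nat \<Rightarrow> real \<Rightarrow> nat \<Rightarrow> real \<Rightarrow> real" where
  "power_chain a c n t = (if n \<le> a then fact a / fact (a - n) * (t - c) ^ (a - n) else 0)"

lemma deriv_chain_power_chain: "deriv_chain (power_chain a c)"
  unfolding deriv_chain_def
proof (intro allI)
  fix n t
  show "(power_chain a c n has_real_derivative power_chain a c (Suc n) t) (at t)"
  proof (cases "n < a")
    case True
    then obtain m where m: "a - n = Suc m" by (metis Suc_diff_Suc)
    have am: "a - Suc n = m" using m by simp
    have d0: "((\<lambda>t. (t - c) ^ Suc m) has_real_derivative real (Suc m) * (t - c) ^ m) (at t)"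
    proof -
      have "((\<lambda>t. t - c) has_real_derivative 1) (at t)" by (rule derivative_eq_intros) (auto intro: derivative_eq_intros)
      from DERIV_power[OF this, of "Suc m"] show ?thesis by simp
    qed
    have "((\<lambda>t. fact a / fact (a - n) * (t - c) ^ (a - n)) has_real_derivative
        fact a / fact (a - n) * (real (Suc m) * (t - c) ^ m)) (at t)"
      unfolding m by (rule DERIV_cmult[OF d0])
    moreover have "fact a / fact (a - n) * (real (Suc m) * (t - c) ^ m) = power_chain a c (Suc n) t"
    proof -
      have fs: "(fact (Suc m)::real) = real (Suc m) * fact m" by (rule fact_Suc)
      have p: "real (Suc m) \<noteq> 0" "(fact m :: real) \<noteq> 0" by simp_all
      have "fact a / fact (Suc m) * (real (Suc m) * (t - c) ^ m) = fact a / fact m * (t - c) ^ m"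
        unfolding fs using p by (simp add: divide_simps)
      then show ?thesis using True unfolding power_chain_def am m by simp
    qed
    moreover have "power_chain a c n = (\<lambda>t. fact a / fact (a - n) * (t - c) ^ (a - n))"
      using True by (simp add: power_chain_def fun_eq_iff)
    ultimately show ?thesis by simp
  next
    case False
    then have "power_chain a c n = (\<lambda>_. if n \<le> a then fact a else 0)" by (auto simp: power_chain_def fun_eq_iff)
    moreover have "power_chain a c (Suc n) t = 0" using False by (simp add: power_chain_def)
    ultimately show ?thesis by simp
  qed
qed

lemma power_chain_at_center: "power_chain a c n c = (if n = a then fact a else 0)"
  by (simp add: power_chain_def)

definition monomial3 :: "real^3 \<Rightarrow> nat \<times> nat \<times> nat \<Rightarrow> real^3 \<Rightarrow> real" where
  "monomial3 u0 \<alpha> = (case \<alpha> of (a,b,c) \<Rightarrow> tensor3 (power_chain a (u0$1)) (power_chain b (u0$2)) (power_chain c (u0$3)) (0,0,0))"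

lemma smooth_monomial3: "smooth_on UNIV (monomial3 u0 \<alpha>)"
  unfolding monomial3_def by (cases \<alpha>) (auto intro: smooth_tensor3 deriv_chain_power_chain)

lemma Dmulti_monomial3:
  "Dmulti (a',b',c') (monomial3 u0 (a,b,c)) u0 = (if (a',b',c') = (a,b,c) then fact a * fact b * fact c else 0)"
  unfolding monomial3_def using Dmulti_tensor3[OF deriv_chain_power_chain deriv_chain_power_chain deriv_chain_power_chain]
  by (simp add: tensor3_def power_chain_at_center)

definition scaled_sqdist :: "real^3 \<Rightarrow> real \<Rightarrow> real^3 \<Rightarrow> real" where
  "scaled_sqdist u0 \<rho> u = (\<Sum>i\<in>UNIV. ((u$i - u0$i) / \<rho>)^2)"

lemma scaled_sqdist_eq: "scaled_sqdist u0 \<rho> u = (norm (u - u0) / \<rho>)^2"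
proof -
  have "(norm (u - u0))^2 = (\<Sum>i\<in>UNIV. ((u - u0)$i)^2)"
    unfolding norm_vec_def L2_set_def by (simp add: sum_nonneg)
  then show ?thesis unfolding scaled_sqdist_def by (simp add: power_divide sum_divide_distrib)
qed

lemma smooth_scaled_sqdist: "smooth_on UNIV (scaled_sqdist u0 \<rho>)"
proof -
  have s1: "smooth_on UNIV (\<lambda>u::real^3. (u$i - u0$i) * inverse \<rho>)" for i
    by (intro smooth_on_mult[OF open_UNIV] smooth_on_diff[OF open_UNIV] smooth_on_coord smooth_on_const)
  have "smooth_on UNIV (\<lambda>u::real^3. ((u$i - u0$i) * inverse \<rho>) * ((u$i - u0$i) * inverse \<rho>))" for i
    using smooth_on_mult[OF open_UNIV s1 s1] .
  then have "smooth_on UNIV (\<lambda>u::real^3. \<Sum>i\<in>UNIV. ((u$i - u0$i) * inverse \<rho>) * ((u$i - u0$i) * inverse \<rho>))"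
    by (intro smooth_on_sum[OF open_UNIV]) auto
  moreover have "(\<lambda>u::real^3. \<Sum>i\<in>UNIV. ((u$i - u0$i) * inverse \<rho>) * ((u$i - u0$i) * inverse \<rho>)) = scaled_sqdist u0 \<rho>"
    by (simp add: fun_eq_iff scaled_sqdist_def power2_eq_square divide_inverse)
  ultimately show ?thesis by simp
qed

definition bump :: "real^3 \<Rightarrow> real \<Rightarrow> real^3 \<Rightarrow> real" where
  "bump u0 \<rho> u = flat 0 (2 - scaled_sqdist u0 \<rho> u) * inverse (flat 0 (2 - scaled_sqdist u0 \<rho> u) + flat 0 (scaled_sqdist u0 \<rho> u - 1))"

lemma flat_0_nonneg: "flat 0 t \<ge> 0" by (simp add: flat_0_eq)

lemma flat_partition_pos: "flat 0 (2 - q) + flat 0 (q - 1) > 0"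
proof (cases "q < 2")
  case True then have "flat 0 (2 - q) > 0" by (simp add: flat_0_eq)
  then show ?thesis using flat_0_nonneg[of "q - 1"] by linarith
next
  case False then have "flat 0 (q - 1) > 0" by (simp add: flat_0_eq)
  then show ?thesis using flat_0_nonneg[of "2 - q"] by linarith
qed

lemma smooth_bump: "smooth_on UNIV (bump u0 \<rho>)"
proof -
  have a: "smooth_on UNIV (\<lambda>u. flat 0 (2 - scaled_sqdist u0 \<rho> u))"
    using smooth_on_compose_real[OF open_UNIV smooth_on_diff[OF open_UNIV smooth_on_const[of UNIV 2] smooth_scaled_sqdist] smooth_real_flat] .
  have b: "smooth_on UNIV (\<lambda>u. flat 0 (scaled_sqdist u0 \<rho> u - 1))"
    using smooth_on_compose_real[OF open_UNIV smooth_on_diff[OF open_UNIV smooth_scaled_sqdist smooth_on_const[of UNIV 1]] smooth_real_flat] .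
  have "smooth_on UNIV (\<lambda>u. inverse (flat 0 (2 - scaled_sqdist u0 \<rho> u) + flat 0 (scaled_sqdist u0 \<rho> u - 1)))"
  proof (rule smooth_on_inverse[OF open_UNIV smooth_on_add[OF open_UNIV a b]])
    fix v :: "real^3"
    show "flat 0 (2 - scaled_sqdist u0 \<rho> v) + flat 0 (scaled_sqdist u0 \<rho> v - 1) \<noteq> 0"
      using flat_partition_pos[of "scaled_sqdist u0 \<rho> v"] by linarith
  qed
  then show ?thesis unfolding bump_def[abs_def] using smooth_on_mult[OF open_UNIV a] by blast
qed

lemma bump_eq_1:
  assumes "0 < \<rho>" "u \<in> ball u0 \<rho>"
  shows "bump u0 \<rho> u = 1"
proof -
  have "norm (u - u0) / \<rho> < 1" "0 \<le> norm (u - u0) / \<rho>"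
    using assms by (simp_all add: dist_norm norm_minus_commute field_simps)
  then have "scaled_sqdist u0 \<rho> u \<le> 1"
    unfolding scaled_sqdist_eq by (simp add: power_le_one)
  then show ?thesis
    unfolding bump_def using flat_partition_pos[of "scaled_sqdist u0 \<rho> u"] by (simp add: flat_0_eq)
qed

lemma bump_eq_0:
  assumes "0 < \<rho>" "u \<notin> cball u0 (2 * \<rho>)"
  shows "bump u0 \<rho> u = 0"
proof -
  have "2 < norm (u - u0) / \<rho>"
    using assms by (simp add: dist_norm norm_minus_commute field_simps)
  then have "2 ^ 2 < (norm (u - u0) / \<rho>) ^ 2"
    by (intro power_strict_mono) auto
  then have "2 \<le> scaled_sqdist u0 \<rho> u"
    unfolding scaled_sqdist_eq by simp
  then show ?thesis unfolding bump_def by (simp add: flat_0_eq)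
qed

lemma Dmulti_local:
  assumes "open Ob" "\<And>v. v \<in> Ob \<Longrightarrow> f v = g v" "u \<in> Ob"
  shows "Dmulti \<beta> f u = Dmulti \<beta> g u"
  unfolding Dmulti_eq_pdiffs using pdiffs_cong[OF assms] .

lemma Dmulti_eq_0_outside:
  assumes "closed C" "\<And>v. v \<notin> C \<Longrightarrow> f v = 0" "u \<notin> C"
  shows "Dmulti \<beta> f u = 0"
proof -
  have "Dmulti \<beta> f u = Dmulti \<beta> (\<lambda>_. 0) u"
    using Dmulti_local[of "- C" f] assms by (simp add: open_Compl)
  also have "\<dots> = 0"
    unfolding Dmulti_eq_pdiffs by (cases "multi_dirs \<beta> = []") (simp_all add: pdiffs_const)
  finally show ?thesis .
qed

lemma bump_monomials:
  assumes "open U" "u0 \<in> U"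
  obtains C and P :: "nat \<times> nat \<times> nat \<Rightarrow> real^3 \<Rightarrow> real"
  where "compact C" "C \<noteq> {}" "C \<subseteq> U" "\<And>\<alpha>. smooth_on UNIV (P \<alpha>)" "\<And>\<alpha> u. u \<notin> C \<Longrightarrow> P \<alpha> u = 0"
    "\<And>\<alpha> a b c. Dmulti (a,b,c) (P \<alpha>) u0 = (if (a,b,c) = \<alpha> then fact a * fact b * fact c else 0)"
proof -
  obtain r where "r > 0" "cball u0 r \<subseteq> U" using assms open_contains_cball by blast
  define \<rho> where "\<rho> = r / 2"
  have "\<rho> > 0" using \<open>r > 0\<close> by (simp add: \<rho>_def)
  define P where "P \<alpha> u = bump u0 \<rho> u * monomial3 u0 \<alpha> u" for \<alpha> u
  show thesis
  proof
    show "compact (cball u0 r)" "cball u0 r \<noteq> {}" "cball u0 r \<subseteq> U"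
      using \<open>r > 0\<close> \<open>cball u0 r \<subseteq> U\<close> by auto
    show "smooth_on UNIV (P \<alpha>)" for \<alpha>
      unfolding P_def[abs_def] using smooth_on_mult[OF open_UNIV smooth_bump smooth_monomial3] .
    show "P \<alpha> u = 0" if "u \<notin> cball u0 r" for \<alpha> u
      using bump_eq_0[OF \<open>\<rho> > 0\<close>, of u u0] that by (simp add: P_def \<rho>_def)
    show "Dmulti (a,b,c) (P \<alpha>) u0 = (if (a,b,c) = \<alpha> then fact a * fact b * fact c else 0)" for \<alpha> a b c
    proof -
      have "Dmulti (a,b,c) (P \<alpha>) u0 = Dmulti (a,b,c) (monomial3 u0 \<alpha>) u0"
        using \<open>\<rho> > 0\<close> by (intro Dmulti_local[of "ball u0 \<rho>"]) (simp_all add: P_def bump_eq_1)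
      then show ?thesis by (cases \<alpha>) (simp add: Dmulti_monomial3)
    qed
  qed
qed

lemma Dmulti_sum_scaleR_const:
  fixes P :: "'i \<Rightarrow> real^3 \<Rightarrow> real" and e :: "'i \<Rightarrow> 'b::real_normed_vector"
  assumes "finite I" "\<And>i. i \<in> I \<Longrightarrow> smooth_on UNIV (P i)"
  shows "Dmulti \<beta> (\<lambda>u. \<Sum>i\<in>I. P i u *\<^sub>R e i) u = (\<Sum>i\<in>I. Dmulti \<beta> (P i) u *\<^sub>R e i)"
proof -
  have smooth: "smooth_on UNIV (\<lambda>u. P i u *\<^sub>R e i)" if "i \<in> I" for i
    using smooth_on_scaleR[OF open_UNIV assms(2)[OF that] smooth_on_const] .
  have "Dmulti \<beta> (\<lambda>u. \<Sum>i\<in>I. P i u *\<^sub>R e i) u = (\<Sum>i\<in>I. Dmulti \<beta> (\<lambda>u. P i u *\<^sub>R e i) u)"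
    unfolding Dmulti_eq_pdiffs by (rule pdiffs_sum[OF open_UNIV assms(1) smooth multi_dirs_Basis UNIV_I])
  also have "\<dots> = (\<Sum>i\<in>I. Dmulti \<beta> (P i) u *\<^sub>R e i)"
    unfolding Dmulti_eq_pdiffs
    by (rule sum.cong[OF refl], rule pdiffs_linear[OF open_UNIV assms(2) bounded_linear_scaleR_left multi_dirs_Basis UNIV_I])
  finally show ?thesis .
qed

section \<open>The Whitney topology and residual sets\<close>

definition whitney_open :: "(real^3) set \<Rightarrow> (real^3 \<Rightarrow> real^4) set \<Rightarrow> bool" where
  "whitney_open U S \<longleftrightarrow> S \<subseteq> Cinf U \<and>
     (\<forall>f\<in>S. \<exists>k \<delta>. continuous_on U \<delta> \<and> (\<forall>u\<in>U. 0 < \<delta> u) \<and> Cinf U \<inter> whitney_nbhd U f k \<delta> \<subseteq> S)"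

lemma istopology_whitney_open: "istopology (whitney_open U)"
  unfolding istopology_def
proof safe
  fix S T assume S: "whitney_open U S" and T: "whitney_open U T"
  show "whitney_open U (S \<inter> T)"
    unfolding whitney_open_def
  proof safe
    fix x assume "x \<in> S" then show "x \<in> Cinf U" using S by (auto simp: whitney_open_def)
  next
    fix f assume f: "f \<in> S" "f \<in> T"
    obtain k1 d1 where 1: "continuous_on U d1" "\<forall>u\<in>U. 0 < d1 u" "Cinf U \<inter> whitney_nbhd U f k1 d1 \<subseteq> S"
      using S f unfolding whitney_open_def by blast
    obtain k2 d2 where 2: "continuous_on U d2" "\<forall>u\<in>U. 0 < d2 u" "Cinf U \<inter> whitney_nbhd U f k2 d2 \<subseteq> T"
      using T f unfolding whitney_open_def by blast
    have "whitney_nbhd U f (max k1 k2) (\<lambda>u. min (d1 u) (d2 u)) \<subseteq> whitney_nbhd U f k1 d1 \<inter> whitney_nbhd U f k2 d2"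
      unfolding whitney_nbhd_def by force
    then show "\<exists>k \<delta>. continuous_on U \<delta> \<and> (\<forall>u\<in>U. 0 < \<delta> u) \<and> Cinf U \<inter> whitney_nbhd U f k \<delta> \<subseteq> S \<inter> T"
      using 1 2 by (intro exI[of _ "max k1 k2"] exI[of _ "\<lambda>u. min (d1 u) (d2 u)"]) (auto intro: continuous_on_min)
  qed
next
  fix \<K> assume K: "\<forall>S\<in>\<K>. whitney_open U S"
  show "whitney_open U (\<Union>\<K>)"
    unfolding whitney_open_def
  proof safe
    fix x X assume "x \<in> X" "X \<in> \<K>" then show "x \<in> Cinf U" using K by (auto simp: whitney_open_def)
  next
    fix f X assume "f \<in> X" "X \<in> \<K>"
    then obtain k \<delta> where "continuous_on U \<delta>" "\<forall>u\<in>U. 0 < \<delta> u" "Cinf U \<inter> whitney_nbhd U f k \<delta> \<subseteq> X"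
      using K unfolding whitney_open_def by blast
    then show "\<exists>k \<delta>. continuous_on U \<delta> \<and> (\<forall>u\<in>U. 0 < \<delta> u) \<and> Cinf U \<inter> whitney_nbhd U f k \<delta> \<subseteq> \<Union>\<K>"
      using \<open>X \<in> \<K>\<close> by blast
  qed
qed

lemma openin_whitney_Cinf: "openin (whitney_Cinf U) S \<longleftrightarrow> whitney_open U S"
proof -
  have "whitney_Cinf U = topology (whitney_open U)"
    unfolding whitney_Cinf_def whitney_open_def[abs_def] by simp
  then show ?thesis using istopology_whitney_open by simp
qed

lemma topspace_whitney_Cinf: "topspace (whitney_Cinf U) = Cinf U"
proof -
  have "whitney_open U (Cinf U)"
    unfolding whitney_open_def
    by (auto intro!: exI[of _ "0::nat"] exI[of _ "\<lambda>_. 1::real"] continuous_on_const)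
  then show ?thesis unfolding topspace_def openin_whitney_Cinf by (auto simp: whitney_open_def)
qed

lemma openin_whitney_Cinf_preimage:
  fixes J :: "(real^3 \<Rightarrow> real^4) \<Rightarrow> 'b::metric_space"
  assumes "open Ob"
    and cont: "\<And>x e. x \<in> Cinf U \<Longrightarrow> 0 < e \<Longrightarrow>
       \<exists>\<eta>>0. \<forall>x'\<in>Cinf U \<inter> whitney_nbhd U x k (\<lambda>_. \<eta>). dist (J x') (J x) < e"
  shows "openin (whitney_Cinf U) {x \<in> Cinf U. J x \<in> Ob}"
  unfolding openin_whitney_Cinf whitney_open_def
proof (intro conjI ballI)
  fix x assume x: "x \<in> {x \<in> Cinf U. J x \<in> Ob}"
  then obtain e where e: "e > 0" "ball (J x) e \<subseteq> Ob"
    using \<open>open Ob\<close> open_contains_ball by blast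
  then obtain \<eta> where "\<eta> > 0" "\<forall>x'\<in>Cinf U \<inter> whitney_nbhd U x k (\<lambda>_. \<eta>). dist (J x') (J x) < e"
    using cont x by blast
  then have "Cinf U \<inter> whitney_nbhd U x k (\<lambda>_. \<eta>) \<subseteq> {x \<in> Cinf U. J x \<in> Ob}"
    using e(2) by (auto simp: dist_commute)
  then show "\<exists>k \<delta>. continuous_on U \<delta> \<and> (\<forall>u\<in>U. 0 < \<delta> u) \<and>
      Cinf U \<inter> whitney_nbhd U x k \<delta> \<subseteq> {x \<in> Cinf U. J x \<in> Ob}"
    using \<open>\<eta> > 0\<close> by (intro exI[of _ k] exI[of _ "\<lambda>_. \<eta>"]) auto
qed auto

lemma closure_of_whitney_Cinf_avoiding:
  fixes J :: "(real^3 \<Rightarrow> real^4) \<Rightarrow> 'b::metric_space"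
  assumes "interior K = {}"
    and onto: "\<And>x k \<delta>. x \<in> Cinf U \<Longrightarrow> continuous_on U \<delta> \<Longrightarrow> \<forall>u\<in>U. 0 < \<delta> u \<Longrightarrow>
       \<exists>\<epsilon>>0. ball (J x) \<epsilon> \<subseteq> J ` (Cinf U \<inter> whitney_nbhd U x k \<delta>)"
  shows "whitney_Cinf U closure_of {x \<in> Cinf U. J x \<notin> K} = Cinf U"
proof
  show "whitney_Cinf U closure_of {x \<in> Cinf U. J x \<notin> K} \<subseteq> Cinf U"
    using closure_of_subset_topspace[of "whitney_Cinf U"] by (simp add: topspace_whitney_Cinf)
  show "Cinf U \<subseteq> whitney_Cinf U closure_of {x \<in> Cinf U. J x \<notin> K}"
  proof (intro subsetI iffD2[OF in_closure_of] conjI allI impI)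
    fix x Ob assume x: "x \<in> Cinf U" and Ob: "x \<in> Ob \<and> openin (whitney_Cinf U) Ob"
    then obtain k \<delta> where \<delta>: "continuous_on U \<delta>" "\<forall>u\<in>U. 0 < \<delta> u" "Cinf U \<inter> whitney_nbhd U x k \<delta> \<subseteq> Ob"
      unfolding openin_whitney_Cinf whitney_open_def by blast
    obtain \<epsilon> where "\<epsilon> > 0" and \<epsilon>: "ball (J x) \<epsilon> \<subseteq> J ` (Cinf U \<inter> whitney_nbhd U x k \<delta>)"
      using onto[OF x \<delta>(1,2)] by blast
    have "\<not> ball (J x) \<epsilon> \<subseteq> K"
    proof
      assume "ball (J x) \<epsilon> \<subseteq> K"
      then have "ball (J x) \<epsilon> \<subseteq> interior K" by (rule interior_maximal) simp
      then show False using \<open>interior K = {}\<close> \<open>\<epsilon> > 0\<close> by auto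
    qed
    then obtain w where w: "w \<in> ball (J x) \<epsilon>" "w \<notin> K" by blast
    have "w \<in> J ` (Cinf U \<inter> whitney_nbhd U x k \<delta>)" using \<epsilon> w(1) by (rule subsetD)
    then obtain y where "y \<in> Cinf U \<inter> whitney_nbhd U x k \<delta>" "J y \<notin> K"
      using w(2) by blast
    then show "\<exists>y. y \<in> {x \<in> Cinf U. J x \<notin> K} \<and> y \<in> Ob"
      using \<delta>(3) by blast
  qed (simp add: topspace_whitney_Cinf)
qed

lemma residual_in_whitney_Cinf_avoiding:
  fixes J :: "(real^3 \<Rightarrow> real^4) \<Rightarrow> 'b::metric_space"
  assumes "closed K" "interior K = {}"
    and cont: "\<And>x e. x \<in> Cinf U \<Longrightarrow> 0 < e \<Longrightarrow>
       \<exists>\<eta>>0. \<forall>x'\<in>Cinf U \<inter> whitney_nbhd U x k (\<lambda>_. \<eta>). dist (J x') (J x) < e"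
    and onto: "\<And>x k \<delta>. x \<in> Cinf U \<Longrightarrow> continuous_on U \<delta> \<Longrightarrow> \<forall>u\<in>U. 0 < \<delta> u \<Longrightarrow>
       \<exists>\<epsilon>>0. ball (J x) \<epsilon> \<subseteq> J ` (Cinf U \<inter> whitney_nbhd U x k \<delta>)"
    and "{x \<in> Cinf U. J x \<notin> K} \<subseteq> S" "S \<subseteq> Cinf U"
  shows "residual_in (whitney_Cinf U) S"
  unfolding residual_in_def topspace_whitney_Cinf
proof (intro conjI exI[of _ "{{x \<in> Cinf U. J x \<in> - K}}"])
  show "\<forall>T\<in>{{x \<in> Cinf U. J x \<in> - K}}. openin (whitney_Cinf U) T \<and> whitney_Cinf U closure_of T = Cinf U"
    using openin_whitney_Cinf_preimage[of "- K", OF _ cont] closure_of_whitney_Cinf_avoiding[OF assms(2) onto]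
      \<open>closed K\<close> by (simp add: open_Compl)
qed (use assms(5,6) in auto)

lemma norm_sum_scaleR_le:
  fixes D :: "'i::finite \<Rightarrow> real" and e :: "'i \<Rightarrow> 'b::real_normed_vector"
  shows "norm (\<Sum>i\<in>UNIV. D i *\<^sub>R (v $ i *\<^sub>R e i)) \<le> norm v * (\<Sum>i\<in>UNIV. \<bar>D i\<bar> * norm (e i))"
proof -
  have "norm (\<Sum>i\<in>UNIV. D i *\<^sub>R (v $ i *\<^sub>R e i)) \<le> (\<Sum>i\<in>UNIV. \<bar>v $ i\<bar> * (\<bar>D i\<bar> * norm (e i)))"
    by (intro order.trans[OF norm_sum] sum_mono) (simp add: abs_mult mult_ac)
  also have "\<dots> \<le> (\<Sum>i\<in>UNIV. norm v * (\<bar>D i\<bar> * norm (e i)))"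
    by (intro sum_mono mult_right_mono component_le_norm_cart) simp
  finally show ?thesis by (simp add: sum_distrib_left)
qed

lemma small_sum_in_whitney_nbhd:
  fixes P :: "'i::finite \<Rightarrow> real^3 \<Rightarrow> real" and e :: "'i \<Rightarrow> real^4"
  assumes "open U" "compact C" "C \<noteq> {}" "C \<subseteq> U"
    and P: "\<And>i. smooth_on UNIV (P i)" "\<And>i u. u \<notin> C \<Longrightarrow> P i u = 0"
    and \<delta>: "continuous_on U \<delta>" "\<forall>u\<in>U. 0 < \<delta> u" and x: "smooth_on U x"
  obtains \<epsilon> where "\<epsilon> > 0"
    "\<And>v. norm v < \<epsilon> \<Longrightarrow> (\<lambda>u. x u + (\<Sum>i\<in>UNIV. P i u *\<^sub>R (v $ i *\<^sub>R e i))) \<in> whitney_nbhd U x k \<delta>"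
proof -
  define S where "S u = (\<Sum>\<beta>\<in>{..k} \<times> {..k} \<times> {..k}. \<Sum>i\<in>UNIV. \<bar>Dmulti \<beta> (P i) u\<bar> * norm (e i))" for u
  have "continuous_on UNIV (Dmulti \<beta> (P i))" for \<beta> i
    unfolding Dmulti_eq_pdiffs by (rule smooth_on_continuous[OF smooth_on_pdiffs[OF P(1) multi_dirs_Basis]])
  then have "continuous_on C S"
    unfolding S_def[abs_def] by (intro continuous_intros) (auto intro: continuous_on_subset[OF _ subset_UNIV])
  then obtain z where "\<forall>y\<in>C. S y \<le> S z"
    using continuous_attains_sup[OF \<open>compact C\<close> \<open>C \<noteq> {}\<close>] by blast
  define M where "M = S z + 1"
  have M: "M > 0" "\<And>u. u \<in> C \<Longrightarrow> S u \<le> M"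
    using \<open>\<forall>y\<in>C. S y \<le> S z\<close> by (auto simp: M_def S_def intro!: sum_nonneg add_nonneg_pos)
  obtain z' where "z' \<in> C" and \<delta>_min: "\<forall>y\<in>C. \<delta> z' \<le> \<delta> y"
    using continuous_attains_inf[OF \<open>compact C\<close> \<open>C \<noteq> {}\<close> continuous_on_subset[OF \<delta>(1) \<open>C \<subseteq> U\<close>]] by blast
  have "\<delta> z' > 0" using \<delta>(2) \<open>z' \<in> C\<close> \<open>C \<subseteq> U\<close> by auto
  show thesis
  proof
    show "\<delta> z' / M > 0" using \<open>\<delta> z' > 0\<close> M(1) by simp
    fix v :: "real^'i" assume v: "norm v < \<delta> z' / M"
    define h where "h u = (\<Sum>i\<in>UNIV. P i u *\<^sub>R (v $ i *\<^sub>R e i))" for u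
    have sh: "smooth_on U h"
      unfolding h_def[abs_def]
      by (intro smooth_on_subset[OF smooth_on_sum[OF open_UNIV] subset_UNIV] smooth_on_scaleR P(1) smooth_on_const) auto
    show "(\<lambda>u. x u + h u) \<in> whitney_nbhd U x k \<delta>"
      unfolding whitney_nbhd_def
    proof (intro CollectI ballI allI impI)
      fix u a b c assume u: "u \<in> U" and abc: "a + b + c \<le> k"
      have "Dmulti (a,b,c) (\<lambda>u. x u + h u) u - Dmulti (a,b,c) x u = Dmulti (a,b,c) h u"
        unfolding Dmulti_eq_pdiffs using pdiffs_add[OF \<open>open U\<close> x sh multi_dirs_Basis u] by simp
      also have "\<dots> = (\<Sum>i\<in>UNIV. Dmulti (a,b,c) (P i) u *\<^sub>R (v $ i *\<^sub>R e i))"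
        unfolding h_def by (rule Dmulti_sum_scaleR_const) (auto intro: P(1))
      finally have diff: "Dmulti (a,b,c) (\<lambda>u. x u + h u) u - Dmulti (a,b,c) x u =
          (\<Sum>i\<in>UNIV. Dmulti (a,b,c) (P i) u *\<^sub>R (v $ i *\<^sub>R e i))" .
      show "norm (Dmulti (a,b,c) (\<lambda>u. x u + h u) u - Dmulti (a,b,c) x u) < \<delta> u"
      proof (cases "u \<in> C")
        case False
        then show ?thesis
          unfolding diff using Dmulti_eq_0_outside[OF compact_imp_closed[OF \<open>compact C\<close>] P(2)] \<delta>(2) u by simp
      next
        case True
        have "norm (\<Sum>i\<in>UNIV. Dmulti (a,b,c) (P i) u *\<^sub>R (v $ i *\<^sub>R e i))
            \<le> norm v * (\<Sum>i\<in>UNIV. \<bar>Dmulti (a,b,c) (P i) u\<bar> * norm (e i))"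
          by (rule norm_sum_scaleR_le)
        also have "\<dots> \<le> norm v * S u"
          unfolding S_def using abc
          by (intro mult_left_mono member_le_sum[where f="\<lambda>\<beta>. \<Sum>i\<in>UNIV. \<bar>Dmulti \<beta> (P i) u\<bar> * norm (e i)"])
            (auto intro: sum_nonneg)
        also have "\<dots> \<le> norm v * M" using M(2)[OF True] by (simp add: mult_left_mono)
        also have "\<dots> < \<delta> z'" using v M(1) by (simp add: field_simps)
        also have "\<dots> \<le> \<delta> u" using \<delta>_min True by simp
        finally show ?thesis unfolding diff .
      qed
    qed
  qed
qed

section \<open>Transversality at points off the boundary of a submanifold\<close>

lemma submanifold_locally_closed:
  assumes "submanifold W" "w \<in> W"
  obtains V where "open V" "w \<in> V" "\<And>y. y \<in> V \<Longrightarrow> y \<in> closure W \<Longrightarrow> y \<in> W"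
proof -
  have "\<exists>V (\<psi>::'a\<Rightarrow>'a) L. open V \<and> w \<in> V \<and> subspace L \<and>
      smooth_on V \<psi> \<and> inj_on \<psi> V \<and> open (\<psi> ` V) \<and> smooth_on (\<psi> ` V) (inv_into V \<psi>) \<and>
      \<psi> ` (W \<inter> V) = L \<inter> \<psi> ` V"
    using assms unfolding submanifold_def by (rule bspec)
  then obtain V and \<psi> :: "'a \<Rightarrow> 'a" and L where ch: "open V" "w \<in> V" "subspace L" "smooth_on V \<psi>" "inj_on \<psi> V"
      "\<psi> ` (W \<inter> V) = L \<inter> \<psi> ` V"
    by blast
  have cont: "continuous_on V \<psi>" using smooth_on_continuous[OF ch(4)] .
  have "y \<in> W" if y: "y \<in> V" "y \<in> closure W" for y
  proof -
    have "y \<in> V \<inter> closure W" using y by (rule IntI)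
    then have "y \<in> closure (V \<inter> W)" using open_Int_closure_subset[OF ch(1), of W] by (rule subsetD[rotated])
    then have "\<exists>s. (\<forall>n. s n \<in> V \<inter> W) \<and> s \<longlonglongrightarrow> y" by (simp only: closure_sequential)
    then obtain s where s: "\<And>n. s n \<in> V \<inter> W" "s \<longlonglongrightarrow> y" by blast
    have "isCont \<psi> y" using continuous_on_eq_continuous_at[OF ch(1)] cont y(1) by blast
    then have "(\<lambda>n. \<psi> (s n)) \<longlonglongrightarrow> \<psi> y" by (rule isCont_tendsto_compose[OF _ s(2)])
    moreover have "\<psi> (s n) \<in> L" for n
    proof -
      have "\<psi> (s n) \<in> \<psi> ` (W \<inter> V)" using s(1)[of n] by (intro imageI) blast
      then show ?thesis unfolding ch(6) by (rule IntD1)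
    qed
    ultimately have "\<psi> y \<in> L" using closed_sequentially[OF closed_subspace[OF ch(3)], of "\<lambda>n. \<psi> (s n)"] by blast
    then have "\<psi> y \<in> L \<inter> \<psi> ` V" using y(1) by (intro IntI imageI)
    then have "\<psi> y \<in> \<psi> ` (W \<inter> V)" unfolding ch(6) .
    then obtain z where z: "\<psi> y = \<psi> z" "z \<in> W \<inter> V" by (rule imageE)
    have "z = y" using inj_onD[OF ch(5) z(1)[symmetric] IntD2[OF z(2)] y(1)] .
    then show "y \<in> W" using z(2) by simp
  qed
  then show ?thesis using that ch(1,2) by blast
qed

lemma nowhere_dense_boundary:
  assumes "submanifold W"
  shows "interior (closure (W - interior W)) = {}"
proof (rule ccontr)
  assume "interior (closure (W - interior W)) \<noteq> {}"
  define Ob where "Ob = interior (closure (W - interior W))"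
  have O: "open Ob" "Ob \<noteq> {}" "Ob \<subseteq> closure (W - interior W)"
    using \<open>interior (closure (W - interior W)) \<noteq> {}\<close> interior_subset[of "closure (W - interior W)"]
    unfolding Ob_def by auto
  have "Ob \<inter> (W - interior W) \<noteq> {}"
    using O open_Int_closure_eq_empty[OF O(1), of "W - interior W"] by blast
  then obtain w where w: "w \<in> Ob" "w \<in> W" "w \<notin> interior W" by blast
  obtain V where V: "open V" "w \<in> V" "\<And>y. y \<in> V \<Longrightarrow> y \<in> closure W \<Longrightarrow> y \<in> W"
    using submanifold_locally_closed[OF assms w(2)] by blast
  have "Ob \<inter> V \<subseteq> W"
  proof
    fix y assume "y \<in> Ob \<inter> V"
    moreover have "closure (W - interior W) \<subseteq> closure W" by (rule closure_mono) blast
    ultimately show "y \<in> W" using V(3) O(3) by blast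
  qed
  then have "Ob \<inter> V \<subseteq> interior W" using O(1) V(1) interior_maximal by blast
  then show False using w V(2) by blast
qed

lemma tangent_interior:
  assumes "w \<in> interior W"
  shows "tangent_space W w = UNIV"
proof safe
  fix v :: 'a
  obtain e where e: "e > 0" "ball w e \<subseteq> interior W" using assms open_interior open_contains_ball by blast
  then have e2: "ball w e \<subseteq> W" using interior_subset by blast
  define e' where "e' = e / (norm v + 1)"
  have np: "norm v + 1 > 0" using norm_ge_zero[of v] by linarith
  then have e': "e' > 0" using e(1) by (simp add: e'_def)
  have "w + t *\<^sub>R v \<in> W" if "\<bar>t\<bar> < e'" for t
  proof -
    have "norm (t *\<^sub>R v) = \<bar>t\<bar> * norm v" by simp
    also have "\<dots> \<le> \<bar>t\<bar> * (norm v + 1)" by (simp add: mult_left_mono)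
    also have "\<dots> < e' * (norm v + 1)" by (rule mult_strict_right_mono[OF that np])
    also have "\<dots> = e" using np by (simp add: e'_def)
    finally show ?thesis using e2 by (auto simp: dist_norm)
  qed
  moreover have "((\<lambda>t. w + t *\<^sub>R v) has_vector_derivative v) (at 0)"
    by (auto intro!: derivative_eq_intros)
  ultimately show "v \<in> tangent_space W w"
    unfolding tangent_space_def using e' by (intro CollectI exI[of _ "\<lambda>t. w + t *\<^sub>R v"] exI[of _ e']) auto
qed simp

lemma transversal_at_outside_boundary:
  assumes "J differentiable (at p)" "J p \<notin> closure (W - interior W)"
  shows "transversal_at J W p"
  unfolding transversal_at_def
proof
  assume "J p \<in> W"
  then have "J p \<in> interior W" using assms(2) closure_subset by blast
  then have tangent: "tangent_space W (J p) = UNIV" by (rule tangent_interior)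
  obtain J' where J': "(J has_derivative J') (at p)" using assms(1) unfolding differentiable_def by blast
  have "0 \<in> range J'" using linear_0[OF has_derivative_linear[OF J']] by (metis rangeI)
  then have "w \<in> {y + z |y z. y \<in> range J' \<and> z \<in> tangent_space W (J p)}" for w
    unfolding tangent by (intro CollectI exI[of _ 0] exI[of _ w]) simp
  then have "{y + z |y z. y \<in> range J' \<and> z \<in> tangent_space W (J p)} = UNIV" by blast
  then show "\<exists>J'. (J has_derivative J') (at p) \<and> {y + z |y z. y \<in> range J' \<and> z \<in> tangent_space W (J p)} = UNIV"
    using J' by blast
qed

section \<open>The slices of \<open>\<pi>\<^sub>j \<circ> F\<close>\<close>

lemma vector_4 [simp]:
 "(vector [x,y,z,w] ::('a::zero)^4)$1 = x"
 "(vector [x,y,z,w] ::('a::zero)^4)$2 = y"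
 "(vector [x,y,z,w] ::('a::zero)^4)$3 = z"
 "(vector [x,y,z,w] ::('a::zero)^4)$4 = w"
  unfolding vector_def by simp_all

lemma bounded_linear_forget_coord: "bounded_linear (forget_coord j)"
proof -
  have "linear (forget_coord j)"
    by (rule linearI) (auto simp: forget_coord_def vec_eq_iff forall_3)
  then show ?thesis using linear_conv_bounded_linear by blast
qed

definition ins_coord :: "4 \<Rightarrow> real^3 \<Rightarrow> real^4" where
  "ins_coord j w =
     (if j = 1 then vector [0, w$1, w$2, w$3]
      else if j = 2 then vector [w$1, 0, w$2, w$3]
      else if j = 3 then vector [w$1, w$2, 0, w$3]
      else vector [w$1, w$2, w$3, 0])"

lemma forget_ins_coord[simp]: "forget_coord j (ins_coord j w) = w"
  using exhaust_4[of j] by (auto simp: forget_coord_def ins_coord_def vec_eq_iff forall_3)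

lemma ins_coord_nth_same[simp]: "ins_coord j w $ j = 0"
  using exhaust_4[of j] by (auto simp: ins_coord_def)

lemma linear_forget_coord: "linear (forget_coord j)"
  using bounded_linear.linear[OF bounded_linear_forget_coord] .

lemma forget_coord_add: "forget_coord j (a + b) = forget_coord j a + forget_coord j b"
  using linear_add[OF linear_forget_coord] .

lemma forget_coord_diff: "forget_coord j (a - b) = forget_coord j a - forget_coord j b"
  using linear_diff[OF linear_forget_coord] .

lemma forget_coord_scaleR: "forget_coord j (c *\<^sub>R a) = c *\<^sub>R forget_coord j a"
  using linear_scale[OF linear_forget_coord] .

lemma forget_coord_sum: "forget_coord j (\<Sum>i\<in>I. f i) = (\<Sum>i\<in>I. forget_coord j (f i))"
  using linear_sum[OF linear_forget_coord] by (simp add: o_def)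

definition slice :: "4 \<Rightarrow> (real^3 \<Rightarrow> real^4) \<Rightarrow> (real^3 \<Rightarrow> real^4) \<Rightarrow> real^3 \<Rightarrow> real \<Rightarrow> real \<Rightarrow> real^3 \<Rightarrow> real^3" where
  "slice j x \<xi> u0 t0 s = (\<lambda>v. forget_coord j (Ftilde j x \<xi> u0 t0 (v, s)))"

text \<open>Through \<open>c\<^sub>j\<close>, the slice depends on the \<open>j\<close>-th coordinate of \<open>x\<close> with this factor.\<close>

definition dir_ratio :: "4 \<Rightarrow> (real^3 \<Rightarrow> real^4) \<Rightarrow> real^3 \<Rightarrow> real^3" where
  "dir_ratio j \<xi> v = inverse (\<xi> v $ j) *\<^sub>R forget_coord j (\<xi> v)"

lemma slice_eq:
  "slice j x \<xi> u0 t0 s v =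
     forget_coord j (x v) + c_fun j x \<xi> u0 t0 v *\<^sub>R forget_coord j (\<xi> v) + s *\<^sub>R forget_coord j (\<xi> v)"
  by (simp add: slice_def Ftilde_def forget_coord_add forget_coord_scaleR)

lemma slice_shift: "slice j x \<xi> u0 t0 s v = slice j x \<xi> u0 t0 0 v + s *\<^sub>R forget_coord j (\<xi> v)"
  by (simp add: slice_eq)

lemma slice_add_coord_vanishing:
  assumes "\<And>u. h u $ j = 0"
  shows "slice j (\<lambda>u. x u + h u) \<xi> u0 t0 s v = slice j x \<xi> u0 t0 s v + forget_coord j (h v)"
  by (simp add: slice_eq c_fun_def a_const_def assms forget_coord_add)

lemma slice_diff: "slice j x' \<xi> u0 t0 0 v - slice j x \<xi> u0 t0 0 v =
   forget_coord j (x' v - x v) - ((x' v - x v) $ j - (x' u0 - x u0) $ j) *\<^sub>R dir_ratio j \<xi> v"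
proof -
  have "c_fun j x' \<xi> u0 t0 v - c_fun j x \<xi> u0 t0 v = - (((x' v - x v) $ j - (x' u0 - x u0) $ j) * inverse (\<xi> v $ j))"
    by (simp add: c_fun_def a_const_def divide_inverse algebra_simps)
  then have "c_fun j x' \<xi> u0 t0 v *\<^sub>R forget_coord j (\<xi> v) - c_fun j x \<xi> u0 t0 v *\<^sub>R forget_coord j (\<xi> v)
      = - (((x' v - x v) $ j - (x' u0 - x u0) $ j) *\<^sub>R dir_ratio j \<xi> v)"
    by (simp add: dir_ratio_def scaleR_left_diff_distrib[symmetric])
  then show ?thesis
    by (simp add: slice_eq algebra_simps forget_coord_diff)
qed

definition coord_nz :: "(real^3) set \<Rightarrow> (real^3 \<Rightarrow> real^4) \<Rightarrow> 4 \<Rightarrow> (real^3) set" where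
  "coord_nz U \<xi> j = {v \<in> U. \<xi> v $ j \<noteq> 0}"

lemma open_coord_nz: "open U \<Longrightarrow> smooth_on U \<xi> \<Longrightarrow> open (coord_nz U \<xi> j)"
proof -
  assume a: "open U" "smooth_on U \<xi>"
  have "continuous_on U (\<lambda>v. \<xi> v $ j)"
    using bounded_linear.continuous_on[OF bounded_linear_vec_nth smooth_on_continuous[OF a(2)]] .
  from continuous_open_preimage[OF this a(1), of "-{0}"]
  have "open (U \<inter> (\<lambda>v. \<xi> v $ j) -` (-{0}))" by auto
  moreover have "U \<inter> (\<lambda>v. \<xi> v $ j) -` (-{0}) = coord_nz U \<xi> j" by (auto simp: coord_nz_def)
  ultimately show ?thesis by simp
qed

lemma coord_nz_subset: "coord_nz U \<xi> j \<subseteq> U" by (auto simp: coord_nz_def)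

lemma smooth_on_vec_nth:
  "open V \<Longrightarrow> smooth_on V x \<Longrightarrow> smooth_on V (\<lambda>v. x v $ j)"
  using smooth_on_linear[OF _ bounded_linear_vec_nth] by blast

lemma smooth_dir_ratio:
  assumes "open U" "smooth_on U \<xi>"
  shows "smooth_on (coord_nz U \<xi> j) (dir_ratio j \<xi>)"
proof -
  let ?V = "coord_nz U \<xi> j"
  have o: "open ?V" using open_coord_nz[OF assms] .
  have s: "smooth_on ?V \<xi>" using smooth_on_subset[OF assms(2) coord_nz_subset] .
  have "smooth_on ?V (\<lambda>v. inverse (\<xi> v $ j))"
    using smooth_on_inverse[OF o smooth_on_vec_nth[OF o s]] by (auto simp: coord_nz_def)
  moreover have "smooth_on ?V (\<lambda>v. forget_coord j (\<xi> v))"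
    using smooth_on_linear[OF o bounded_linear_forget_coord s] .
  ultimately show ?thesis unfolding dir_ratio_def[abs_def] using smooth_on_scaleR[OF o] by blast
qed

lemma smooth_slice:
  assumes "open U" "smooth_on U \<xi>" "smooth_on U x"
  shows "smooth_on (coord_nz U \<xi> j) (slice j x \<xi> u0 t0 s)"
proof -
  let ?V = "coord_nz U \<xi> j"
  have o: "open ?V" using open_coord_nz[OF assms(1,2)] .
  have s: "smooth_on ?V \<xi>" using smooth_on_subset[OF assms(2) coord_nz_subset] .
  have sx: "smooth_on ?V x" using smooth_on_subset[OF assms(3) coord_nz_subset] .
  have i: "smooth_on ?V (\<lambda>v. inverse (\<xi> v $ j))"
    using smooth_on_inverse[OF o smooth_on_vec_nth[OF o s]] by (auto simp: coord_nz_def)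
  have "smooth_on ?V (\<lambda>v. - (x v $ j - a_const j x \<xi> u0 t0))"
    using smooth_on_linear[OF o bounded_linear_minus[OF bounded_linear_ident]
        smooth_on_diff[OF o smooth_on_vec_nth[OF o sx] smooth_on_const]] by simp
  then have c: "smooth_on ?V (c_fun j x \<xi> u0 t0)"
    using smooth_on_mult[OF o _ i] unfolding c_fun_def[abs_def] divide_inverse by blast
  have f1: "smooth_on ?V (\<lambda>v. forget_coord j (x v))"
    using smooth_on_linear[OF o bounded_linear_forget_coord sx] .
  have f2: "smooth_on ?V (\<lambda>v. forget_coord j (\<xi> v))"
    using smooth_on_linear[OF o bounded_linear_forget_coord s] .
  have "smooth_on ?V (\<lambda>v. forget_coord j (x v) + c_fun j x \<xi> u0 t0 v *\<^sub>R forget_coord j (\<xi> v) + s *\<^sub>R forget_coord j (\<xi> v))"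
    by (intro smooth_on_add[OF o] smooth_on_scaleR[OF o] f1 f2 c smooth_on_const)
  then show ?thesis unfolding slice_eq[abs_def] .
qed

lemma smooth_on_Cinf: "x \<in> Cinf U \<Longrightarrow> smooth_on U x"
  by (simp add: Cinf_def)

lemma jet_nth: "idx m = ((a,b,c),i) \<Longrightarrow> jet idx g u $ m = Dmulti (a,b,c) g u $ i / (fact a * fact b * fact c)"
  by (simp add: jet_def)

lemma jet_index_order:
  assumes "bij_betw idx UNIV (jet_index k)" "idx m = ((a,b,c),i)"
  shows "a + b + c \<le> k"
proof -
  have "idx m \<in> jet_index k" using bij_betwE[OF assms(1)] by blast
  then show ?thesis using assms(2) unfolding jet_index_def by auto
qed

lemma abs_jet_nth_diff_le:
  assumes "idx m = ((a,b,c),i)"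
  shows "\<bar>(jet idx f u - jet idx g u) $ m\<bar> \<le> norm (Dmulti (a,b,c) f u - Dmulti (a,b,c) g u)"
proof -
  have "(1::real) \<le> fact a * fact b * fact c"
    by (metis fact_ge_1 mult_ge1_I)
  then have "\<bar>(jet idx f u - jet idx g u) $ m\<bar> \<le> \<bar>(Dmulti (a,b,c) f u - Dmulti (a,b,c) g u) $ i\<bar>"
    by (simp add: jet_nth[where idx=idx, OF assms] diff_divide_distrib[symmetric] abs_divide divide_le_eq abs_mult
        mult_le_cancel_left1)
  also have "\<dots> \<le> norm (Dmulti (a,b,c) f u - Dmulti (a,b,c) g u)"
    by (rule component_le_norm_cart)
  finally show ?thesis .
qed

lemma jet_add:
  assumes "open V" "smooth_on V f" "smooth_on V g" "u \<in> V"
  shows "jet idx (\<lambda>w. f w + g w) u = jet idx f u + jet idx g u"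
  by (simp add: vec_eq_iff jet_def Dmulti_eq_pdiffs pdiffs_add[OF assms(1-3) multi_dirs_Basis assms(4)]
      add_divide_distrib split: prod.split)

lemma jet_sum_bump_monomials:
  fixes idx :: "'j::finite \<Rightarrow> (nat \<times> nat \<times> nat) \<times> 3"
  assumes "inj idx" "\<And>\<alpha>. smooth_on UNIV (P \<alpha>)"
    and "\<And>\<alpha> a b c. Dmulti (a,b,c) (P \<alpha>) u0 = (if (a,b,c) = \<alpha> then fact a * fact b * fact c else 0)"
  shows "jet idx (\<lambda>u. \<Sum>m\<in>UNIV. P (fst (idx m)) u *\<^sub>R (v $ m *\<^sub>R axis (snd (idx m)) 1)) u0 = v"
proof (subst vec_eq_iff, rule allI)
  fix m0
  obtain a b c i where m0: "idx m0 = ((a,b,c),i)" by (metis prod.exhaust)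
  have picks_m0: "(Dmulti (a,b,c) (P (fst (idx m))) u0 *\<^sub>R (v $ m *\<^sub>R axis (snd (idx m)) 1) :: real^3) $ i =
      (if m = m0 then fact a * fact b * fact c * v $ m0 else 0)" for m
  proof -
    have "(fst (idx m) = (a,b,c) \<and> snd (idx m) = i) \<longleftrightarrow> m = m0"
      using \<open>inj idx\<close> m0 by (metis injD prod.collapse prod.inject)
    then show ?thesis by (auto simp: assms(3) axis_def)
  qed
  have "Dmulti (a,b,c) (\<lambda>u. \<Sum>m\<in>UNIV. P (fst (idx m)) u *\<^sub>R (v $ m *\<^sub>R axis (snd (idx m)) 1)) u0 $ i =
      (\<Sum>m\<in>UNIV. Dmulti (a,b,c) (P (fst (idx m))) u0 *\<^sub>R (v $ m *\<^sub>R axis (snd (idx m)) 1)) $ i"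
    by (subst Dmulti_sum_scaleR_const) (auto intro: assms(2))
  also have "\<dots> = (\<Sum>m\<in>UNIV. if m = m0 then fact a * fact b * fact c * v $ m0 else 0)"
    unfolding sum_component by (rule sum.cong[OF refl picks_m0])
  finally show "jet idx (\<lambda>u. \<Sum>m\<in>UNIV. P (fst (idx m)) u *\<^sub>R (v $ m *\<^sub>R axis (snd (idx m)) 1)) u0 $ m0 = v $ m0"
    by (simp add: jet_nth[where idx=idx, OF m0])
qed

text \<open>By \<open>slice_diff\<close> and the Leibniz rule, the \<open>\<alpha>\<close>-th derivative of the slice at \<open>u0\<close> is
  Lipschitz in the derivatives of \<open>x\<close> at \<open>u0\<close> of order at most \<open>\<alpha>\<close>, with this constant.\<close>

definition slice_lipschitz :: "4 \<Rightarrow> (real^3 \<Rightarrow> real^4) \<Rightarrow> real^3 \<Rightarrow> nat \<times> nat \<times> nat \<Rightarrow> real" where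
  "slice_lipschitz j \<xi> u0 \<alpha> = onorm (forget_coord j) +
     sum_masks (length (multi_dirs \<alpha>)) (\<lambda>ms. norm (pdiffs (masked (map Not ms) (multi_dirs \<alpha>)) (dir_ratio j \<xi>) u0))"

lemma slice_lipschitz_nonneg: "0 \<le> slice_lipschitz j \<xi> u0 \<alpha>"
  unfolding slice_lipschitz_def
  by (intro add_nonneg_nonneg onorm_pos_le bounded_linear_forget_coord sum_masks_nonneg) simp

lemma Dmulti_slice_diff:
  assumes U: "open U" and xi: "smooth_on U \<xi>" and u0: "u0 \<in> U" "\<xi> u0 $ j \<noteq> 0"
    and sx: "smooth_on U x" and sx': "smooth_on U x'"
  shows "Dmulti \<beta> (slice j x' \<xi> u0 t0 0) u0 - Dmulti \<beta> (slice j x \<xi> u0 t0 0) u0 =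
      forget_coord j (Dmulti \<beta> (\<lambda>v. x' v - x v) u0) -
      Dmulti \<beta> (\<lambda>v. ((x' v - x v) - (x' u0 - x u0)) $ j *\<^sub>R dir_ratio j \<xi> v) u0"
proof -
  define V where "V = coord_nz U \<xi> j"
  have oV: "open V" and u0V: "u0 \<in> V" and VU: "V \<subseteq> U"
    using open_coord_nz[OF U xi] u0 coord_nz_subset by (auto simp: V_def coord_nz_def)
  have sG: "smooth_on V (slice j x' \<xi> u0 t0 0)" "smooth_on V (slice j x \<xi> u0 t0 0)"
    using smooth_slice[OF U xi sx'] smooth_slice[OF U xi sx] V_def by simp_all
  have sd: "smooth_on V (\<lambda>v. x' v - x v)" using smooth_on_subset[OF smooth_on_diff[OF U sx' sx] VU] .
  have sfd: "smooth_on V (\<lambda>v. forget_coord j (x' v - x v))"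
    using smooth_on_linear[OF oV bounded_linear_forget_coord sd] .
  have sfr: "smooth_on V (\<lambda>v. ((x' v - x v) - (x' u0 - x u0)) $ j *\<^sub>R dir_ratio j \<xi> v)"
  proof (rule smooth_on_scaleR[OF oV])
    show "smooth_on V (\<lambda>v. ((x' v - x v) - (x' u0 - x u0)) $ j)"
      by (rule smooth_on_vec_nth[OF oV smooth_on_diff[OF oV sd smooth_on_const]])
    show "smooth_on V (dir_ratio j \<xi>)" using smooth_dir_ratio[OF U xi] V_def by simp
  qed
  have "Dmulti \<beta> (slice j x' \<xi> u0 t0 0) u0 - Dmulti \<beta> (slice j x \<xi> u0 t0 0) u0
      = Dmulti \<beta> (\<lambda>v. slice j x' \<xi> u0 t0 0 v - slice j x \<xi> u0 t0 0 v) u0"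
    unfolding Dmulti_eq_pdiffs using pdiffs_diff[OF oV sG multi_dirs_Basis u0V] by simp
  also have "(\<lambda>v. slice j x' \<xi> u0 t0 0 v - slice j x \<xi> u0 t0 0 v) =
      (\<lambda>v. forget_coord j (x' v - x v) - ((x' v - x v) - (x' u0 - x u0)) $ j *\<^sub>R dir_ratio j \<xi> v)"
    by (simp add: fun_eq_iff slice_diff)
  also have "Dmulti \<beta> \<dots> u0 =
      forget_coord j (Dmulti \<beta> (\<lambda>v. x' v - x v) u0) -
      Dmulti \<beta> (\<lambda>v. ((x' v - x v) - (x' u0 - x u0)) $ j *\<^sub>R dir_ratio j \<xi> v) u0"
    unfolding Dmulti_eq_pdiffs using pdiffs_diff[OF oV sfd sfr multi_dirs_Basis u0V]
      pdiffs_linear[OF oV sd bounded_linear_forget_coord multi_dirs_Basis u0V] by simp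
  finally show ?thesis .
qed

lemma norm_Dmulti_slice_diff_le:
  assumes U: "open U" and xi: "smooth_on U \<xi>" and u0: "u0 \<in> U" "\<xi> u0 $ j \<noteq> 0"
    and sx: "smooth_on U x" and sx': "smooth_on U x'"
    and close: "\<And>a' b' c'. a' \<le> a \<Longrightarrow> b' \<le> b \<Longrightarrow> c' \<le> c \<Longrightarrow>
       norm (Dmulti (a',b',c') x' u0 - Dmulti (a',b',c') x u0) < \<eta>"
  shows "norm (Dmulti (a,b,c) (slice j x' \<xi> u0 t0 0) u0 - Dmulti (a,b,c) (slice j x \<xi> u0 t0 0) u0)
           \<le> \<eta> * slice_lipschitz j \<xi> u0 (a,b,c)"
proof -
  define V where "V = coord_nz U \<xi> j"
  have oV: "open V" and u0V: "u0 \<in> V" and VU: "V \<subseteq> U"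
    using open_coord_nz[OF U xi] u0 coord_nz_subset by (auto simp: V_def coord_nz_def)
  have sdir: "smooth_on V (dir_ratio j \<xi>)" using smooth_dir_ratio[OF U xi] V_def by simp
  define d where "d v = x' v - x v" for v
  have sd: "smooth_on V d" unfolding d_def[abs_def] using smooth_on_subset[OF smooth_on_diff[OF U sx' sx] VU] .
  have Dd: "norm (Dmulti (a',b',c') d u0) < \<eta>" if "a' \<le> a" "b' \<le> b" "c' \<le> c" for a' b' c'
    using close[OF that] pdiffs_diff[OF oV smooth_on_subset[OF sx' VU] smooth_on_subset[OF sx VU] multi_dirs_Basis u0V]
    by (simp add: Dmulti_eq_pdiffs d_def[abs_def])
  define f where "f v = (d v - d u0) $ j" for v
  have sf: "smooth_on V f"
    unfolding f_def[abs_def] using smooth_on_vec_nth[OF oV smooth_on_diff[OF oV sd smooth_on_const]] .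
  have split: "Dmulti (a,b,c) (slice j x' \<xi> u0 t0 0) u0 - Dmulti (a,b,c) (slice j x \<xi> u0 t0 0) u0 =
      forget_coord j (Dmulti (a,b,c) d u0) - Dmulti (a,b,c) (\<lambda>v. f v *\<^sub>R dir_ratio j \<xi> v) u0"
    unfolding f_def[abs_def] d_def[abs_def] by (rule Dmulti_slice_diff[OF U xi u0 sx sx'])
  have "norm (forget_coord j (Dmulti (a,b,c) d u0)) \<le> onorm (forget_coord j) * norm (Dmulti (a,b,c) d u0)"
    by (rule onorm[OF bounded_linear_forget_coord])
  also have "\<dots> \<le> \<eta> * onorm (forget_coord j)"
    using mult_left_mono[OF less_imp_le[OF Dd[of a b c]] onorm_pos_le[OF bounded_linear_forget_coord]]
    by (simp add: mult.commute)
  finally have forget_part: "norm (forget_coord j (Dmulti (a,b,c) d u0)) \<le> \<eta> * onorm (forget_coord j)" .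
  have leibniz_part: "norm (Dmulti (a,b,c) (\<lambda>v. f v *\<^sub>R dir_ratio j \<xi> v) u0) \<le>
      \<eta> * sum_masks (a+b+c) (\<lambda>ms. norm (pdiffs (masked (map Not ms) (multi_dirs (a,b,c))) (dir_ratio j \<xi>) u0))"
  proof (rule norm_Dmulti_scaleR_le[OF oV sf sdir u0V])
    fix a' b' c' assume "a' \<le> a" "b' \<le> b" "c' \<le> c"
    then show "\<bar>Dmulti (a',b',c') f u0\<bar> \<le> \<eta>"
      using abs_Dmulti_centered_coord_le[OF oV sd u0V Dd] by (simp add: f_def[abs_def])
  qed
  show ?thesis
    unfolding split slice_lipschitz_def length_multi_dirs distrib_left
    using norm_triangle_ineq4[of "forget_coord j (Dmulti (a,b,c) d u0)"
        "Dmulti (a,b,c) (\<lambda>v. f v *\<^sub>R dir_ratio j \<xi> v) u0"] forget_part leibniz_part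
    by linarith
qed

lemma jet_slice_continuity:
  fixes idx :: "'j::finite \<Rightarrow> (nat \<times> nat \<times> nat) \<times> 3"
  assumes U: "open U" and xi: "smooth_on U \<xi>" and u0: "u0 \<in> U" "\<xi> u0 $ j \<noteq> 0"
    and idx: "bij_betw idx UNIV (jet_index k)" and x: "x \<in> Cinf U" and e: "\<epsilon> > 0"
  shows "\<exists>\<eta>>0. \<forall>x'\<in>Cinf U \<inter> whitney_nbhd U x k (\<lambda>_. \<eta>).
           dist (jet idx (slice j x' \<xi> u0 t0 0) u0) (jet idx (slice j x \<xi> u0 t0 0) u0) < \<epsilon>"
proof -
  let ?J = "\<lambda>y. jet idx (slice j y \<xi> u0 t0 0) u0"
  define S where "S = (\<Sum>m\<in>UNIV. slice_lipschitz j \<xi> u0 (fst (idx m)))"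
  have "S \<ge> 0" unfolding S_def by (simp add: sum_nonneg slice_lipschitz_nonneg)
  define \<eta> where "\<eta> = \<epsilon> / (S + 1)"
  have "\<eta> > 0" using e \<open>S \<ge> 0\<close> by (simp add: \<eta>_def)
  show ?thesis
  proof (intro exI[of _ \<eta>] conjI \<open>\<eta> > 0\<close> ballI)
    fix x' assume x': "x' \<in> Cinf U \<inter> whitney_nbhd U x k (\<lambda>_. \<eta>)"
    have "\<bar>(?J x' - ?J x) $ m\<bar> \<le> \<eta> * slice_lipschitz j \<xi> u0 (fst (idx m))" for m
    proof -
      obtain a b c i where m: "idx m = ((a,b,c),i)" by (metis prod.exhaust)
      have "norm (Dmulti (a',b',c') x' u0 - Dmulti (a',b',c') x u0) < \<eta>"
        if "a' \<le> a" "b' \<le> b" "c' \<le> c" for a' b' c'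
        using x' u0(1) jet_index_order[OF idx m] that unfolding whitney_nbhd_def by auto
      then have "norm (Dmulti (a,b,c) (slice j x' \<xi> u0 t0 0) u0 - Dmulti (a,b,c) (slice j x \<xi> u0 t0 0) u0)
          \<le> \<eta> * slice_lipschitz j \<xi> u0 (a,b,c)"
        using x x' by (intro norm_Dmulti_slice_diff_le[OF U xi u0]) (auto simp: smooth_on_Cinf)
      then show ?thesis
        by (intro order.trans[OF abs_jet_nth_diff_le[where idx=idx, OF m]]) (simp add: m)
    qed
    then have "norm (?J x' - ?J x) \<le> \<eta> * S"
      unfolding S_def sum_distrib_left by (intro order.trans[OF norm_le_l1_cart] sum_mono)
    also have "\<dots> < \<epsilon>"
      using \<open>\<eta> > 0\<close> \<open>S \<ge> 0\<close> by (simp add: \<eta>_def field_simps)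
    finally show "dist (?J x') (?J x) < \<epsilon>" by (simp add: dist_norm)
  qed
qed

lemma jet_scaleR:
  assumes "open V" "smooth_on V f" "u \<in> V"
  shows "jet idx (\<lambda>w. s *\<^sub>R f w) u = s *\<^sub>R jet idx f u"
  by (simp add: vec_eq_iff jet_def Dmulti_eq_pdiffs pdiffs_scaleR[OF assms(1,2) multi_dirs_Basis assms(3)]
      split: prod.split)

lemma differentiable_jet:
  fixes idx :: "'j::finite \<Rightarrow> (nat \<times> nat \<times> nat) \<times> 3"
  assumes "open V" "smooth_on V g" "u \<in> V"
  shows "jet idx g differentiable (at u)"
proof -
  have "(\<lambda>w. jet idx g w $ m) differentiable (at u)" for m
  proof -
    obtain a b c i where m: "idx m = ((a,b,c),i)" by (metis prod.exhaust)
    have "smooth_on V (\<lambda>w. Dmulti (a,b,c) g w $ i * inverse (fact a * fact b * fact c))"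
      unfolding Dmulti_eq_pdiffs
      by (intro smooth_on_mult[OF assms(1)] smooth_on_vec_nth[OF assms(1)] smooth_on_const
          smooth_on_pdiffs[OF assms(2) multi_dirs_Basis])
    moreover have "(\<lambda>w. jet idx g w $ m) = (\<lambda>w. Dmulti (a,b,c) g w $ i * inverse (fact a * fact b * fact c))"
      by (simp add: fun_eq_iff jet_nth[where idx=idx, OF m] divide_inverse)
    ultimately show ?thesis
      using smooth_on_differentiable[OF _ assms(3)] by (simp only:)
  qed
  then have "(\<lambda>w. \<Sum>m\<in>UNIV. jet idx g w $ m *\<^sub>R axis m (1::real)) differentiable (at u)"
    by (intro differentiable_sum differentiable_scaleR differentiable_const) auto
  moreover have "(\<lambda>w. \<Sum>m\<in>UNIV. jet idx g w $ m *\<^sub>R axis m 1) = jet idx g"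
    by (simp add: fun_eq_iff vec_eq_iff axis_def if_distrib cong: if_cong)
  ultimately show ?thesis by (simp only:)
qed

lemma jet1_slice_differentiable:
  fixes idx :: "'j::finite \<Rightarrow> (nat \<times> nat \<times> nat) \<times> 3"
  assumes U: "open U" and xi: "smooth_on U \<xi>" and u0: "u0 \<in> U" "\<xi> u0 $ j \<noteq> 0"
    and x: "x \<in> Cinf U"
  shows "(jet1 idx (\<lambda>p. forget_coord j (Ftilde j x \<xi> u0 t0 p))) differentiable (at (u0, 0))"
proof -
  define V where "V = coord_nz U \<xi> j"
  have oV: "open V" and u0V: "u0 \<in> V"
    using open_coord_nz[OF U xi] u0 by (auto simp: V_def coord_nz_def)
  have sG: "smooth_on V (slice j x \<xi> u0 t0 0)"
    using smooth_slice[OF U xi smooth_on_Cinf[OF x]] V_def by simp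
  have sP: "smooth_on V (\<lambda>v. forget_coord j (\<xi> v))"
    unfolding V_def
    using smooth_on_linear[OF open_coord_nz[OF U xi] bounded_linear_forget_coord smooth_on_subset[OF xi coord_nz_subset]] .
  define A where "A = jet idx (slice j x \<xi> u0 t0 0)"
  define B where "B = jet idx (\<lambda>v. forget_coord j (\<xi> v))"
  have eq: "jet1 idx (\<lambda>p. forget_coord j (Ftilde j x \<xi> u0 t0 p)) p = A (fst p) + snd p *\<^sub>R B (fst p)"
    if "p \<in> V \<times> UNIV" for p
  proof -
    obtain u s where p: "p = (u, s)" by (cases p)
    with that have "u \<in> V" by simp
    have "jet1 idx (\<lambda>p. forget_coord j (Ftilde j x \<xi> u0 t0 p)) p = jet idx (slice j x \<xi> u0 t0 s) u"
      by (simp add: p jet1_def slice_def)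
    also have "slice j x \<xi> u0 t0 s = (\<lambda>v. slice j x \<xi> u0 t0 0 v + s *\<^sub>R forget_coord j (\<xi> v))"
      by (rule ext, rule slice_shift)
    also have "jet idx (\<lambda>v. slice j x \<xi> u0 t0 0 v + s *\<^sub>R forget_coord j (\<xi> v)) u =
        A u + jet idx (\<lambda>v. s *\<^sub>R forget_coord j (\<xi> v)) u"
      unfolding A_def by (rule jet_add[OF oV sG smooth_on_scaleR[OF oV smooth_on_const sP] \<open>u \<in> V\<close>])
    also have "jet idx (\<lambda>v. s *\<^sub>R forget_coord j (\<xi> v)) u = s *\<^sub>R B u"
      unfolding B_def by (rule jet_scaleR[OF oV sP \<open>u \<in> V\<close>])
    finally show ?thesis by (simp add: p)
  qed
  have diff: "(\<lambda>p. A (fst p) + snd p *\<^sub>R B (fst p)) differentiable (at (u0, 0))"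
  proof -
    have fst: "fst differentiable (at (u0, 0::real))" and snd: "snd differentiable (at (u0, 0::real))"
      by (simp_all add: bounded_linear_imp_differentiable bounded_linear_fst bounded_linear_snd)
    have "A differentiable (at (fst (u0, 0::real)))" "B differentiable (at (fst (u0, 0::real)))"
      unfolding A_def B_def fst_conv
      by (rule differentiable_jet[OF oV sG u0V], rule differentiable_jet[OF oV sP u0V])
    then have dA: "(A \<circ> fst) differentiable (at (u0, 0::real))"
      and dB: "(B \<circ> fst) differentiable (at (u0, 0::real))"
      by (auto intro: differentiable_chain_at[OF fst])
    show ?thesis using differentiable_add[OF dA differentiable_scaleR[OF snd dB]] by (simp add: o_def)
  qed
  show ?thesis
    by (rule differentiable_cong_open[OF open_Times[OF oV open_UNIV] _ eq[symmetric] diff]) (simp add: u0V)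
qed

lemma jet_slice_add_coord_vanishing:
  assumes U: "open U" and xi: "smooth_on U \<xi>" and u0: "u0 \<in> U" "\<xi> u0 $ j \<noteq> 0"
    and sx: "smooth_on U x" and sh: "smooth_on U h" and h_j: "\<And>u. h u $ j = 0"
  shows "jet idx (slice j (\<lambda>u. x u + h u) \<xi> u0 t0 0) u0 =
           jet idx (slice j x \<xi> u0 t0 0) u0 + jet idx (\<lambda>u. forget_coord j (h u)) u0"
proof -
  define V where "V = coord_nz U \<xi> j"
  have oV: "open V" and u0V: "u0 \<in> V" and VU: "V \<subseteq> U"
    using open_coord_nz[OF U xi] u0 coord_nz_subset by (auto simp: V_def coord_nz_def)
  have "slice j (\<lambda>u. x u + h u) \<xi> u0 t0 0 = (\<lambda>w. slice j x \<xi> u0 t0 0 w + forget_coord j (h w))"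
    by (rule ext, rule slice_add_coord_vanishing[OF h_j])
  moreover have "smooth_on V (slice j x \<xi> u0 t0 0)" "smooth_on V (\<lambda>w. forget_coord j (h w))"
    using smooth_slice[OF U xi sx] smooth_on_linear[OF oV bounded_linear_forget_coord smooth_on_subset[OF sh VU]]
    by (simp_all add: V_def)
  ultimately show ?thesis using jet_add[OF oV _ _ u0V] by simp
qed

lemma jet_slice_locally_onto:
  fixes idx :: "'j::finite \<Rightarrow> (nat \<times> nat \<times> nat) \<times> 3"
  assumes U: "open U" and xi: "smooth_on U \<xi>" and u0: "u0 \<in> U" "\<xi> u0 $ j \<noteq> 0"
    and idx: "bij_betw idx UNIV (jet_index k)" and x: "x \<in> Cinf U"
    and \<delta>: "continuous_on U \<delta>" "\<forall>u\<in>U. 0 < \<delta> u"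
  shows "\<exists>\<epsilon>>0. ball (jet idx (slice j x \<xi> u0 t0 0) u0) \<epsilon> \<subseteq>
           (\<lambda>y. jet idx (slice j y \<xi> u0 t0 0) u0) ` (Cinf U \<inter> whitney_nbhd U x k' \<delta>)"
proof -
  let ?J = "\<lambda>y. jet idx (slice j y \<xi> u0 t0 0) u0"
  obtain C and P :: "nat \<times> nat \<times> nat \<Rightarrow> real^3 \<Rightarrow> real" where C: "compact C" "C \<noteq> {}" "C \<subseteq> U"
    and P: "\<And>\<alpha>. smooth_on UNIV (P \<alpha>)" "\<And>\<alpha> u. u \<notin> C \<Longrightarrow> P \<alpha> u = 0"
    and P_u0: "\<And>\<alpha> a b c. Dmulti (a,b,c) (P \<alpha>) u0 = (if (a,b,c) = \<alpha> then fact a * fact b * fact c else 0)"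
    using bump_monomials[OF U u0(1)] by blast
  define e where "e m = ins_coord j (axis (snd (idx m)) 1)" for m
  define h where "h v u = (\<Sum>m\<in>UNIV. P (fst (idx m)) u *\<^sub>R (v $ m *\<^sub>R e m))" for v :: "real^'j" and u
  have sx: "smooth_on U x" using x by (rule smooth_on_Cinf)
  obtain \<epsilon> where "\<epsilon> > 0"
    and small: "\<And>v. norm v < \<epsilon> \<Longrightarrow> (\<lambda>u. x u + h v u) \<in> whitney_nbhd U x k' \<delta>"
    using small_sum_in_whitney_nbhd[where P="\<lambda>m. P (fst (idx m))" and e=e and k=k', OF U C P \<delta> sx]
    unfolding h_def by blast
  have sh: "smooth_on UNIV (h v)" for v
    unfolding h_def[abs_def] by (intro smooth_on_sum[OF open_UNIV] smooth_on_scaleR P(1) smooth_on_const) auto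
  have hide_j: "h v u $ j = 0" for v u by (simp add: h_def e_def)
  have jet_h: "jet idx (\<lambda>u. forget_coord j (h v u)) u0 = v" for v
    using jet_sum_bump_monomials[OF bij_betw_imp_inj_on[OF idx] P(1) P_u0]
    by (simp add: h_def e_def forget_coord_sum forget_coord_scaleR)
  have J_shift: "?J (\<lambda>u. x u + h v u) = ?J x + v" for v
    using jet_slice_add_coord_vanishing[where idx=idx, OF U xi u0 sx smooth_on_subset[OF sh subset_UNIV] hide_j]
      jet_h
    by simp
  have in_Cinf: "(\<lambda>u. x u + h v u) \<in> Cinf U" for v
  proof -
    have "h v u = 0" if "u \<notin> U" for u
    proof -
      have "u \<notin> C" using C(3) that by blast
      then show ?thesis by (simp add: h_def P(2))
    qed
    then show ?thesis
      using x smooth_on_add[OF U sx smooth_on_subset[OF sh]] by (auto simp: Cinf_def)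
  qed
  have "ball (?J x) \<epsilon> \<subseteq> ?J ` (Cinf U \<inter> whitney_nbhd U x k' \<delta>)"
  proof
    fix w assume "w \<in> ball (?J x) \<epsilon>"
    then have "norm (w - ?J x) < \<epsilon>" by (simp add: dist_norm norm_minus_commute)
    then have "(\<lambda>u. x u + h (w - ?J x) u) \<in> Cinf U \<inter> whitney_nbhd U x k' \<delta>"
      using in_Cinf small by blast
    moreover have "w = ?J (\<lambda>u. x u + h (w - ?J x) u)" by (simp add: J_shift)
    ultimately show "w \<in> ?J ` (Cinf U \<inter> whitney_nbhd U x k' \<delta>)" by (rule rev_image_eqI[where f = ?J])
  qed
  then show ?thesis using \<open>\<epsilon> > 0\<close> by blast
qed

theorem lemma4p1:
  fixes k :: nat
    and idx :: "'j::finite \<Rightarrow> (nat \<times> nat \<times> nat) \<times> 3"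
    and W :: "(real^'j) set"
    and U :: "(real^3) set" and Iv :: "real set"
    and \<xi> :: "real^3 \<Rightarrow> real^4"
    and u0 :: "real^3" and t0 :: real and j :: 4
  assumes "bij_betw idx UNIV (jet_index k)"
    and "submanifold W"
    and "open U" and "open Iv" and "is_interval Iv"
    and "smooth_on U \<xi>" and "\<forall>u\<in>U. \<xi> u \<noteq> 0"
    and "u0 \<in> U" and "t0 \<in> Iv"
    and "\<xi> u0 $ j \<noteq> 0"
  shows "residual_in (whitney_Cinf U)
           {x \<in> Cinf U. transversal_at
               (jet1 idx (\<lambda>p. forget_coord j (Ftilde j x \<xi> u0 t0 p))) W (u0, 0)}"
proof (rule residual_in_whitney_Cinf_avoiding)
  \<comment> \<open>Transversality is only asked at \<open>(u0, 0)\<close>.\<close>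
  let ?J = "\<lambda>x. jet idx (slice j x \<xi> u0 t0 0) u0"
  have jet1_eq: "jet1 idx (\<lambda>p. forget_coord j (Ftilde j x \<xi> u0 t0 p)) (u0, 0) = ?J x" for x
    by (simp add: jet1_def slice_def)
  show "closed (closure (W - interior W))" by simp
  show "interior (closure (W - interior W)) = {}" using nowhere_dense_boundary[OF assms(2)] .
  show "\<exists>\<eta>>0. \<forall>x'\<in>Cinf U \<inter> whitney_nbhd U x k (\<lambda>_. \<eta>). dist (?J x') (?J x) < e"
    if "x \<in> Cinf U" "0 < e" for x e
    using jet_slice_continuity[OF assms(3,6,8,10,1) that] .
  show "\<exists>\<epsilon>>0. ball (?J x) \<epsilon> \<subseteq> ?J ` (Cinf U \<inter> whitney_nbhd U x k' \<delta>)"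
    if "x \<in> Cinf U" "continuous_on U \<delta>" "\<forall>u\<in>U. 0 < \<delta> u" for x k' \<delta>
    using jet_slice_locally_onto[OF assms(3,6,8,10,1) that] .
  show "{x \<in> Cinf U. ?J x \<notin> closure (W - interior W)} \<subseteq>
      {x \<in> Cinf U. transversal_at (jet1 idx (\<lambda>p. forget_coord j (Ftilde j x \<xi> u0 t0 p))) W (u0, 0)}"
  proof safe
    fix x assume "x \<in> Cinf U" "?J x \<notin> closure (W - interior W)"
    then show "transversal_at (jet1 idx (\<lambda>p. forget_coord j (Ftilde j x \<xi> u0 t0 p))) W (u0, 0)"
      by (intro transversal_at_outside_boundary jet1_slice_differentiable[OF assms(3,6,8,10)]) (simp_all add: jet1_eq)
  qed
qed auto

end
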